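(* Let $R$ be a finite chain ring with maximal ideal $\langle\gamma\rangle$, even index of nilpotency $e$, and residue field $K$ with $|K|=p^r$, so $|R|=p^{er}$. Let $n$ be an odd positive integer which is a power of a prime, with $\gcd(n,p)=1$. Then there exists a non-trivial cyclic self-dual code of length $n$ over $R$ if and only if $\mathrm{ord}_n(p^r)$ is odd.
   Context: $\mathrm{ord}_n(q)$ denotes the multiplicative order of $q$ modulo $n$ (smallest $l\ge1$ with $q^l\equiv1\pmod n$). A finite chain ring is a finite commutative local ring whose ideals are linearly ordered; its maximal ideal is generated by a nilpotent $\gamma$ of nilpotency index $e$, with residue field $K=R/\langle\gamma\rangle$. A code of length $n$ over $R$ is an $R$-submodule of $R^n$; cyclic means closed under cyclic shift; $C^\perp$ is the dual under $[u,v]=\sum u_iv_i$; self-dual means $C=C^\perp$. For even $e$, the trivial self-dual code is $\gamma^{e/2}R^n$; non-trivial means self-dual and different from it. *)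

theory Defs
  imports "HOL-Number_Theory.Number_Theory"
begin

(* Ideals of a commutative ring (type-class style; the ring is the whole type) *)
definition is_ideal :: "'a::comm_ring_1 set \<Rightarrow> bool" where
  "is_ideal I \<longleftrightarrow> 0 \<in> I \<and> (\<forall>x\<in>I. \<forall>y\<in>I. x + y \<in> I) \<and> (\<forall>r. \<forall>x\<in>I. r * x \<in> I)"

definition is_maximal_ideal :: "'a::comm_ring_1 set \<Rightarrow> bool" where
  "is_maximal_ideal M \<longleftrightarrow> is_ideal M \<and> M \<noteq> UNIV \<and>
     (\<forall>J. is_ideal J \<and> M \<subseteq> J \<longrightarrow> J = M \<or> J = UNIV)"

definition local_ring :: "'a::comm_ring_1 itself \<Rightarrow> bool" where
  "local_ring _ \<longleftrightarrow> (\<exists>!M::'a set. is_maximal_ideal M)"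

definition finite_chain_ring :: "'a::comm_ring_1 itself \<Rightarrow> bool" where
  "finite_chain_ring T \<longleftrightarrow> finite (UNIV :: 'a set) \<and> local_ring T \<and>
     (\<forall>I J :: 'a set. is_ideal I \<and> is_ideal J \<longrightarrow> I \<subseteq> J \<or> J \<subseteq> I)"

definition principal_ideal :: "'a::comm_ring_1 \<Rightarrow> 'a set" where
  "principal_ideal g = range (\<lambda>x. g * x)"

definition nilpotency_index :: "'a::comm_ring_1 \<Rightarrow> nat \<Rightarrow> bool" where
  "nilpotency_index g e \<longleftrightarrow> g ^ e = 0 \<and> (\<forall>k<e. g ^ k \<noteq> 0)"

definition quotient_ring :: "'a::comm_ring_1 set \<Rightarrow> 'a set set" where
  "quotient_ring I = (\<lambda>x. {x + y | y. y \<in> I}) ` UNIV"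

definition words :: "nat \<Rightarrow> (nat \<Rightarrow> 'a::zero) set" where
  "words n = {v. \<forall>i\<ge>n. v i = 0}"

definition linear_code :: "nat \<Rightarrow> (nat \<Rightarrow> 'a::comm_ring_1) set \<Rightarrow> bool" where
  "linear_code n C \<longleftrightarrow> C \<subseteq> words n \<and> (\<lambda>i. 0) \<in> C \<and> (\<forall>u\<in>C. \<forall>v\<in>C. (\<lambda>i. u i + v i) \<in> C)
     \<and> (\<forall>r. \<forall>v\<in>C. (\<lambda>i. r * v i) \<in> C)"

(* cyclic shift (c_0,...,c_{n-1}) |-> (c_{n-1},c_0,...,c_{n-2}) *)
definition cyc_shift :: "nat \<Rightarrow> (nat \<Rightarrow> 'a::zero) \<Rightarrow> nat \<Rightarrow> 'a" where
  "cyc_shift n v = (\<lambda>i. if i < n then v ((i + n - 1) mod n) else 0)"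

definition cyclic_code :: "nat \<Rightarrow> (nat \<Rightarrow> 'a::comm_ring_1) set \<Rightarrow> bool" where
  "cyclic_code n C \<longleftrightarrow> linear_code n C \<and> (\<forall>v\<in>C. cyc_shift n v \<in> C)"

definition code_inner :: "nat \<Rightarrow> (nat \<Rightarrow> 'a::comm_ring_1) \<Rightarrow> (nat \<Rightarrow> 'a) \<Rightarrow> 'a" where
  "code_inner n u v = (\<Sum>i<n. u i * v i)"

definition dual_code :: "nat \<Rightarrow> (nat \<Rightarrow> 'a::comm_ring_1) set \<Rightarrow> (nat \<Rightarrow> 'a) set" where
  "dual_code n C = {u \<in> words n. \<forall>v\<in>C. code_inner n u v = 0}"

definition self_dual :: "nat \<Rightarrow> (nat \<Rightarrow> 'a::comm_ring_1) set \<Rightarrow> bool" where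
  "self_dual n C \<longleftrightarrow> linear_code n C \<and> C = dual_code n C"

definition trivial_code :: "nat \<Rightarrow> 'a::comm_ring_1 \<Rightarrow> nat \<Rightarrow> (nat \<Rightarrow> 'a) set" where
  "trivial_code n g e = (\<lambda>x. (\<lambda>i. g ^ (e div 2) * x i)) ` words n"

end

(*
  Codes of length n are read as polynomials modulo x^n - 1, so that cyclic codes are ideals and
  <u, v> is the constant term of u(x) v(x^-1). Let J be the ideal generated by gamma. Because
  gcd(n, q) = 1, the Frobenius congruence F^q = F(x^q) (mod J) shows that R[x]/(x^n - 1) has no
  nilpotents modulo J.

  If q^j = -1 (mod n) for some j, then F(x^-1) = F^(q^j) (mod J). Hence a codeword gamma^t F of a
  self-dual cyclic code with 2t < e satisfies F F(x^-1) in J, so F lies in J and the codeword is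
  divisible by gamma^(t+1); by induction the code is gamma^(e/2) R^n.

  Otherwise the sum of the x^i over the q-cyclotomic coset of 1 is fixed by Frobenius but not by
  x -> x^-1 modulo J, which yields some b outside J with b b(x^-1) in J. A power E of b is then an
  idempotent with E E(x^-1) = 0, and E R[x] + gamma^(e/2) (1 - E - E(x^-1)) R[x] is a non-trivial
  self-dual cyclic code.

  Finally, for an odd prime power n the only square roots of 1 modulo n are 1 and -1, so some power
  of q is -1 modulo n exactly when ord_n(q) is even.
*)

theory Submission
  imports Defs "HOL-Computational_Algebra.Polynomial"
begin

section \<open>Chain rings and their residue field\<close>

locale nilpotent_maximal_ideal =
  fixes g :: "'a::comm_ring_1" and e :: nat
  assumes maximal: "is_maximal_ideal (principal_ideal g)"
    and nilpotent: "nilpotency_index g e"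
begin

abbreviation M :: "'a set" where "M \<equiv> principal_ideal g"

lemma mem_M_iff: "a \<in> M \<longleftrightarrow> (\<exists>y. a = g * y)"
  unfolding principal_ideal_def by auto

lemma M_add: "a \<in> M \<Longrightarrow> b \<in> M \<Longrightarrow> a + b \<in> M"
  unfolding mem_M_iff by (metis distrib_left)

lemma M_mult_left: "a \<in> M \<Longrightarrow> b * a \<in> M"
  unfolding mem_M_iff by (metis mult.left_commute)

lemma M_mult_right: "a \<in> M \<Longrightarrow> a * b \<in> M"
  using M_mult_left by (metis mult.commute)

lemma M_uminus: "a \<in> M \<Longrightarrow> - a \<in> M"
  using M_mult_left[of a "-1"] by simp

lemma M_diff: "a \<in> M \<Longrightarrow> b \<in> M \<Longrightarrow> a - b \<in> M"
  using M_add M_uminus by (metis diff_conv_add_uminus)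

lemma M_zero [simp]: "0 \<in> M"
  unfolding mem_M_iff by (rule exI[of _ 0]) simp

lemma M_sum: "(\<And>i. i \<in> A \<Longrightarrow> f i \<in> M) \<Longrightarrow> sum f A \<in> M"
  by (induct A rule: infinite_finite_induct) (auto intro: M_add)

lemma g_in_M: "g \<in> M"
  by (auto simp: mem_M_iff intro: exI[of _ 1])

lemma one_not_in_M: "1 \<notin> M"
proof
  assume "1 \<in> M"
  then have "x \<in> M" for x using M_mult_left[of 1 x] by simp
  then show False using maximal unfolding is_maximal_ideal_def by auto
qed

lemma power_e_eq_0: "g ^ e = 0" and power_nonzero_below_e: "k < e \<Longrightarrow> g ^ k \<noteq> 0"
  using nilpotent unfolding nilpotency_index_def by auto

lemma e_pos: "e > 0"
  using power_e_eq_0 by (cases e) auto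

lemma unit_not_in_M: "a * b = 1 \<Longrightarrow> a \<notin> M"
  using M_mult_right[of a b] one_not_in_M by auto

lemma one_minus_M_unit:
  assumes "m \<in> M" shows "\<exists>b. (1 - m) * b = 1"
proof -
  obtain y where "m = g * y" using assms by (auto simp: mem_M_iff)
  then have "m ^ e = 0" using power_e_eq_0 by (simp add: power_mult_distrib)
  moreover have "(1 - m) * (\<Sum>i<e. m ^ i) = 1 - m ^ e" by (simp add: one_diff_power_eq)
  ultimately show ?thesis by auto
qed

lemma unit_if_not_in_M:
  assumes "a \<notin> M" shows "\<exists>b. a * b = 1"
proof -
  define J where "J = {m + a * r | m r. m \<in> M}"
  have "is_ideal J"
    unfolding is_ideal_def J_def
  proof (intro conjI ballI allI)
    show "0 \<in> {m + a * r |m r. m \<in> M}" by (intro CollectI exI[of _ 0]) auto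
  next
    fix x y assume "x \<in> {m + a * r |m r. m \<in> M}" "y \<in> {m + a * r |m r. m \<in> M}"
    then obtain m1 r1 m2 r2 where "x = m1 + a * r1" "y = m2 + a * r2" "m1 \<in> M" "m2 \<in> M"
      by auto
    then show "x + y \<in> {m + a * r |m r. m \<in> M}"
      by (intro CollectI exI[of _ "m1 + m2"] exI[of _ "r1 + r2"]) (auto simp: algebra_simps M_add)
  next
    fix s x assume "x \<in> {m + a * r |m r. m \<in> M}"
    then obtain m1 r1 where "x = m1 + a * r1" "m1 \<in> M" by auto
    then have "s * x = s * m1 + a * (s * r1)" "s * m1 \<in> M" by (auto simp: algebra_simps M_mult_right)
    then show "s * x \<in> {m + a * r |m r. m \<in> M}" by blast
  qed
  moreover have "x \<in> J" if "x \<in> M" for x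
    unfolding J_def using that by (intro CollectI exI[of _ x] exI[of _ 0]) simp
  then have "M \<subseteq> J" by blast
  moreover have "a \<in> J" unfolding J_def by (intro CollectI exI[of _ 0] exI[of _ 1]) simp
  ultimately have "J = UNIV" using maximal assms unfolding is_maximal_ideal_def by auto
  then obtain m r where "1 = m + a * r" "m \<in> M" unfolding J_def by blast
  moreover obtain b where "(1 - m) * b = 1" using one_minus_M_unit \<open>m \<in> M\<close> by blast
  ultimately have "a * (r * b) = 1" by (metis add_diff_cancel_left' mult.assoc)
  then show ?thesis by blast
qed

lemma mult_not_in_M: "a \<notin> M \<Longrightarrow> b \<notin> M \<Longrightarrow> a * b \<notin> M"
proof -
  assume "a \<notin> M" "b \<notin> M"
  then obtain a' b' where "a * a' = 1" "b * b' = 1" using unit_if_not_in_M by blast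
  then have "(a * b) * (a' * b') = 1" by (metis mult.left_commute mult.assoc mult_1_right)
  then show ?thesis using unit_not_in_M by blast
qed

lemma power_not_in_M: "a \<notin> M \<Longrightarrow> a ^ k \<notin> M"
  by (induct k) (simp_all add: one_not_in_M mult_not_in_M)

lemma sum_diff_in_M: "(\<And>i. i \<in> A \<Longrightarrow> f i - h i \<in> M) \<Longrightarrow> sum f A - sum h A \<in> M"
  by (simp add: M_sum flip: sum_subtractf)

lemma prod_diff_in_M: "(\<And>i. i \<in> A \<Longrightarrow> f i - h i \<in> M) \<Longrightarrow> prod f A - prod h A \<in> M"
proof (induct A rule: infinite_finite_induct)
  case (insert x F)
  have "prod f (insert x F) - prod h (insert x F) = (f x - h x) * prod f F + h x * (prod f F - prod h F)"
    using insert by (simp add: algebra_simps)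
  then show ?case using insert M_add M_mult_left M_mult_right by simp
qed auto

lemma power_diff_in_M: "a - b \<in> M \<Longrightarrow> a ^ k - b ^ k \<in> M"
  using prod_diff_in_M[of "{..<k}" "\<lambda>_. a" "\<lambda>_. b"] by simp

lemma prod_not_in_M: "(\<And>i. i \<in> A \<Longrightarrow> f i \<notin> M) \<Longrightarrow> prod f A \<notin> M"
  by (induct A rule: infinite_finite_induct) (simp_all add: one_not_in_M mult_not_in_M)

lemma in_M_if_power_mult_eq_0:
  assumes "g ^ k * y = 0" "k < e" shows "y \<in> M"
proof (rule ccontr)
  assume "y \<notin> M"
  then obtain b where "y * b = 1" using unit_if_not_in_M by blast
  then have "g ^ k = 0" using assms by (metis mult.assoc mult_1_right mult_zero_left)
  then show False using power_nonzero_below_e assms by auto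
qed

text \<open>Write \<open>y = g ^ j * u\<close> with \<open>j\<close> maximal; then \<open>u\<close> is a unit and \<open>g ^ (k + j) = 0\<close>.\<close>

lemma dvd_power_if_power_mult_eq_0:
  assumes "g ^ k * y = 0" "k \<le> e" shows "\<exists>z. y = g ^ (e - k) * z"
proof (cases "y = 0")
  case True then show ?thesis by (auto intro: exI[of _ 0])
next
  case False
  define S where "S = {j. \<exists>z. y = g ^ j * z}"
  have "S \<subseteq> {..<e}"
  proof
    fix j assume "j \<in> S" then obtain z where "y = g ^ j * z" unfolding S_def by auto
    then show "j \<in> {..<e}" using False power_e_eq_0
      by (metis lessThan_iff linorder_not_le mult_zero_left power_add le_add_diff_inverse)
  qed
  moreover have "0 \<in> S" unfolding S_def by auto
  ultimately have fin: "finite S" "S \<noteq> {}" using finite_subset by auto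
  define j where "j = Max S"
  have "j \<in> S" unfolding j_def using fin by simp
  then obtain u where u: "y = g ^ j * u" unfolding S_def by auto
  have "u \<notin> M"
  proof
    assume "u \<in> M" then obtain w where "u = g * w" by (auto simp: mem_M_iff)
    then have "Suc j \<in> S" unfolding S_def using u by (auto simp: algebra_simps intro!: exI[of _ w])
    then show False using fin unfolding j_def by (meson Max_ge Suc_n_not_le_n)
  qed
  then obtain b where b: "u * b = 1" using unit_if_not_in_M by blast
  have "g ^ (k + j) * u = 0" using assms(1) u by (simp add: power_add algebra_simps)
  then have "g ^ (k + j) = 0" using b by (metis mult.assoc mult_1_right mult_zero_left)
  then have "k + j \<ge> e" using power_nonzero_below_e by (meson not_le)
  then have "y = g ^ (e - k) * (g ^ (j - (e - k)) * u)" using u assms(2)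
    by (simp add: mult.assoc[symmetric] power_add[symmetric])
  then show ?thesis by blast
qed

end

locale finite_residue_field = nilpotent_maximal_ideal +
  fixes q :: nat
  assumes finite_ring: "finite (UNIV :: 'a set)"
    and card_residue_field: "card (quotient_ring M) = q"
begin

definition coset :: "'a \<Rightarrow> 'a set" where
  "coset a = {a + y | y. y \<in> M}"

lemma quotient_ring_eq: "quotient_ring M = range coset"
  unfolding quotient_ring_def coset_def by simp

lemma coset_eq_iff: "coset a = coset b \<longleftrightarrow> a - b \<in> M"
proof
  assume "coset a = coset b"
  moreover have "a \<in> coset a" unfolding coset_def by (intro CollectI exI[of _ 0]) simp
  ultimately obtain y where "a = b + y" "y \<in> M" unfolding coset_def by auto
  then show "a - b \<in> M" by simp
next
  assume ab: "a - b \<in> M"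
  show "coset a = coset b"
  proof (rule equalityI; rule subsetI)
    fix x assume "x \<in> coset a"
    then obtain y where "x = a + y" "y \<in> M" unfolding coset_def by auto
    then show "x \<in> coset b" unfolding coset_def using ab M_add
      by (intro CollectI exI[of _ "(a - b) + y"]) auto
  next
    fix x assume "x \<in> coset b"
    then obtain y where "x = b + y" "y \<in> M" unfolding coset_def by auto
    then show "x \<in> coset a" unfolding coset_def using ab M_diff
      by (intro CollectI exI[of _ "y - (a - b)"]) auto
  qed
qed

definition rep :: "'a \<Rightarrow> 'a" where
  "rep a = (SOME x. x \<in> coset a)"

definition Reps :: "'a set" where
  "Reps = range rep"

lemma rep_diff_in_M: "rep a - a \<in> M"
proof -
  have "a \<in> coset a" unfolding coset_def by (intro CollectI exI[of _ 0]) simp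
  then have "rep a \<in> coset a" unfolding rep_def by (rule someI)
  then show ?thesis unfolding coset_def by auto
qed

lemma rep_cong: "a - b \<in> M \<Longrightarrow> rep a = rep b"
  unfolding rep_def using coset_eq_iff by metis

lemma finite_Reps: "finite Reps"
  unfolding Reps_def using finite_ring by simp

lemma rep_in_Reps: "rep a \<in> Reps"
  unfolding Reps_def by simp

lemma rep_Reps: "c \<in> Reps \<Longrightarrow> rep c = c"
  unfolding Reps_def using rep_cong rep_diff_in_M by auto

lemma Reps_eqI: "c \<in> Reps \<Longrightarrow> c' \<in> Reps \<Longrightarrow> c - c' \<in> M \<Longrightarrow> c = c'"
  using rep_cong rep_Reps by metis

lemma card_Reps: "card Reps = q"
proof -
  have "bij_betw coset Reps (quotient_ring M)"
  proof (rule bij_betw_imageI)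
    show "inj_on coset Reps" using coset_eq_iff Reps_eqI by (auto intro!: inj_onI)
    have "coset (rep a) = coset a" for a using coset_eq_iff rep_diff_in_M by blast
    then show "coset ` Reps = quotient_ring M" unfolding quotient_ring_eq Reps_def by auto
  qed
  then show ?thesis using card_residue_field bij_betw_same_card by metis
qed

lemma q_ge_2: "q \<ge> 2"
proof -
  have "rep 0 \<noteq> rep 1"
  proof
    assume "rep 0 = rep 1"
    then have "1 = (rep 0 - 0) - (rep 1 - 1)" by simp
    also have "\<dots> \<in> M" by (intro M_diff rep_diff_in_M)
    finally show False using one_not_in_M by simp
  qed
  moreover have "card {rep 0, rep 1} \<le> card Reps"
    by (intro card_mono finite_Reps) (auto simp: rep_in_Reps)
  ultimately show ?thesis using card_Reps by simp
qed

lemma bij_betw_rep_comp: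
  assumes "\<And>x y. h x - h y \<in> M \<Longrightarrow> x - y \<in> M" "A \<subseteq> Reps" "\<And>c. c \<in> A \<Longrightarrow> rep (h c) \<in> A"
  shows "bij_betw (\<lambda>c. rep (h c)) A A"
proof -
  have inj: "inj_on (\<lambda>c. rep (h c)) A"
  proof
    fix c c' assume cc': "c \<in> A" "c' \<in> A" "rep (h c) = rep (h c')"
    then have "h c - h c' = (rep (h c') - h c') - (rep (h c) - h c)" by simp
    also have "\<dots> \<in> M" by (intro M_diff rep_diff_in_M)
    finally have "c - c' \<in> M" by (rule assms(1))
    with cc' assms(2) show "c = c'" by (intro Reps_eqI) auto
  qed
  have "finite A" using assms(2) finite_Reps finite_subset by blast
  moreover have "(\<lambda>c. rep (h c)) ` A \<subseteq> A" using assms(3) by blast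
  ultimately have "(\<lambda>c. rep (h c)) ` A = A" using inj by (rule endo_inj_surj)
  then show ?thesis using inj by (simp add: bij_betw_def)
qed

text \<open>Translation by \<open>1\<close> permutes the representatives; summing shows that the characteristic
  of the residue field divides \<open>q\<close>.\<close>

lemma of_nat_q_in_M: "of_nat q \<in> M"
proof -
  have "bij_betw (\<lambda>c. rep (1 + c)) Reps Reps"
    by (rule bij_betw_rep_comp) (auto simp: rep_in_Reps)
  then have "(\<Sum>c\<in>Reps. rep (1 + c)) = (\<Sum>c\<in>Reps. c)"
    by (rule sum.reindex_bij_betw)
  moreover have "(\<Sum>c\<in>Reps. rep (1 + c)) - (\<Sum>c\<in>Reps. 1 + c) \<in> M"
    by (rule sum_diff_in_M) (rule rep_diff_in_M)
  moreover have "(\<Sum>c\<in>Reps. 1 + c) = of_nat q + (\<Sum>c\<in>Reps. c)"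
    using card_Reps by (simp add: sum.distrib)
  ultimately have "- of_nat q \<in> M" by simp
  then show ?thesis using M_uminus[of "- of_nat q"] by simp
qed

lemma card_Reps_minus_M: "card (Reps - M) = q - 1"
proof -
  have "rep 0 \<in> M" using rep_diff_in_M[of 0] by simp
  then have "Reps \<inter> M = {rep 0}"
    using Reps_eqI rep_in_Reps M_diff by blast
  then have "Reps - M = Reps - {rep 0}" by blast
  then show ?thesis using card_Reps finite_Reps rep_in_Reps by simp
qed

text \<open>Fermat's little theorem in the residue field: multiplication by a unit \<open>a\<close> permutes the
  nonzero representatives, so \<open>a ^ (q - 1)\<close> times their product is congruent to that product.\<close>

lemma power_q_diff_in_M: "a ^ q - a \<in> M"
proof (cases "a \<in> M")
  case True
  moreover have "a ^ q = a * a ^ (q - 1)" using q_ge_2 by (simp flip: power_Suc)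
  ultimately show ?thesis using M_mult_right M_diff by metis
next
  case False
  let ?U = "Reps - M"
  have "rep (a * c) \<in> ?U" if "c \<in> ?U" for c
  proof -
    have "a * c \<notin> M" using that False mult_not_in_M by auto
    moreover have "a * c = rep (a * c) - (rep (a * c) - a * c)" by simp
    ultimately have "rep (a * c) \<notin> M" using M_diff rep_diff_in_M by metis
    then show ?thesis using rep_in_Reps by blast
  qed
  moreover have "x - y \<in> M" if "a * x - a * y \<in> M" for x y
    using that False mult_not_in_M by (metis right_diff_distrib)
  ultimately have "bij_betw (\<lambda>c. rep (a * c)) ?U ?U"
    by (intro bij_betw_rep_comp) auto
  then have "(\<Prod>c\<in>?U. rep (a * c)) = (\<Prod>c\<in>?U. c)"
    by (rule prod.reindex_bij_betw)
  moreover have "(\<Prod>c\<in>?U. rep (a * c)) - (\<Prod>c\<in>?U. a * c) \<in> M"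
    by (rule prod_diff_in_M) (rule rep_diff_in_M)
  moreover have "(\<Prod>c\<in>?U. a * c) = a ^ (q - 1) * (\<Prod>c\<in>?U. c)"
    using card_Reps_minus_M by (simp add: prod.distrib)
  ultimately have "(a ^ (q - 1) - 1) * (\<Prod>c\<in>?U. c) \<in> M"
    by (simp add: algebra_simps) (metis M_uminus minus_diff_eq)
  moreover have "(\<Prod>c\<in>?U. c) \<notin> M" by (rule prod_not_in_M) simp
  ultimately have "a ^ (q - 1) - 1 \<in> M" using mult_not_in_M by blast
  then have "a * (a ^ (q - 1) - 1) \<in> M" by (rule M_mult_left)
  moreover have "a * a ^ (q - 1) = a ^ q" using q_ge_2 by (simp add: power_Suc[symmetric])
  ultimately show ?thesis by (simp add: algebra_simps)
qed

end


section \<open>Words as polynomials modulo \<open>x ^ n - 1\<close>\<close>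

lemma finite_words: "finite (UNIV :: 'a::zero set) \<Longrightarrow> finite (words n :: (nat \<Rightarrow> 'a) set)"
  using finite_set_of_finite_funs[of "{..<n}" "UNIV :: 'a set" 0]
  unfolding words_def by (simp add: not_less)

lemma words_factor:
  fixes c :: "'a::comm_ring_1"
  assumes "w \<in> words n" "\<And>l. \<exists>y. w l = c * y"
  shows "\<exists>w' \<in> words n. w = (\<lambda>l. c * w' l)"
proof -
  define w' where "w' l = (if l < n then SOME y. w l = c * y else 0)" for l
  have "w l = c * w' l" for l
  proof (cases "l < n")
    case True
    then show ?thesis unfolding w'_def using someI_ex[OF assms(2)[of l]] by simp
  next
    case False
    then show ?thesis using assms(1) unfolding w'_def words_def by simp
  qed
  moreover have "w' \<in> words n" unfolding w'_def words_def by simp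
  ultimately show ?thesis by blast
qed

lemma minus_one_squared_mod:
  assumes "n > 0" shows "((n - 1) * (n - 1)) mod n = 1 mod (n::nat)"
proof (cases "n = 1")
  case True then show ?thesis by simp
next
  case False
  with assms have "(n - 1) * (n - 1) = 1 + n * (n - 2)" by (cases n) (auto simp: algebra_simps)
  then show ?thesis by (metis mod_mult_self2 mult.commute)
qed

lemma pcompose_monom: "pcompose (monom c k) Q = smult c (Q ^ k)"
  for Q :: "'a::comm_ring_1 poly"
proof -
  have "pcompose ([:0, 1:] ^ k) Q = Q ^ k"
    by (induct k) (simp_all add: pcompose_1 pcompose_mult pcompose_pCons)
  then show ?thesis by (simp add: monom_altdef[of c k] pcompose_smult)
qed

lemma pcompose_monom_monom:
  "pcompose (monom c k) (monom (1::'a::comm_ring_1) m) = monom c (k * m)"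
  by (simp add: pcompose_monom monom_power smult_monom mult.commute)

lemma pcompose_monom_eq_sum:
  "pcompose (F::'a::comm_ring_1 poly) (monom 1 m) = (\<Sum>j\<le>degree F. monom (coeff F j) (j * m))"
  by (subst (1) poly_as_sum_of_monoms[symmetric]) (simp only: pcompose_sum pcompose_monom_monom)

locale cyclic_words =
  fixes n :: nat
  assumes n_pos: "n > 0"
begin

definition word_of_poly :: "'a::comm_ring_1 poly \<Rightarrow> nat \<Rightarrow> 'a" where
  "word_of_poly F = (\<lambda>i. if i < n then (\<Sum>j\<le>degree F. if j mod n = i then coeff F j else 0) else 0)"

definition poly_of_word :: "(nat \<Rightarrow> 'a::comm_ring_1) \<Rightarrow> 'a poly" where
  "poly_of_word w = (\<Sum>i<n. monom (w i) i)"

definition cyc_cong :: "'a::comm_ring_1 poly \<Rightarrow> 'a poly \<Rightarrow> bool" where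
  "cyc_cong F G \<longleftrightarrow> (monom 1 n - 1) dvd (F - G)"

lemma word_of_poly_altdef:
  assumes "degree F < N"
  shows "word_of_poly F i = (if i < n then (\<Sum>j<N. if j mod n = i then coeff F j else 0) else 0)"
proof -
  have "(\<Sum>j\<le>degree F. if j mod n = i then coeff F j else 0) = (\<Sum>j<N. if j mod n = i then coeff F j else 0)"
    by (rule sum.mono_neutral_left) (use assms in \<open>auto simp: coeff_eq_0\<close>)
  then show ?thesis unfolding word_of_poly_def by simp
qed

lemma word_of_poly_add: "word_of_poly (F + G) = (\<lambda>i. word_of_poly F i + word_of_poly G i)"
proof
  fix i
  define N where "N = Suc (max (degree F) (degree G))"
  have "degree (F + G) < N" "degree F < N" "degree G < N"
    unfolding N_def using degree_add_le_max[of F G] by auto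
  moreover have "\<forall>j. (if j mod n = i then coeff (F + G) j else 0)
      = (if j mod n = i then coeff F j else 0) + (if j mod n = i then coeff G j else 0)"
    by simp
  ultimately show "word_of_poly (F + G) i = word_of_poly F i + word_of_poly G i"
    by (simp add: word_of_poly_altdef sum.distrib)
qed

lemma word_of_poly_smult: "word_of_poly (smult c F) = (\<lambda>i. c * word_of_poly F i)"
proof
  fix i
  define N where "N = Suc (degree F)"
  have "degree (smult c F) < N" "degree F < N"
    using degree_smult_le[of c F] by (auto simp: N_def)
  moreover have "\<forall>j. (if j mod n = i then coeff (smult c F) j else 0)
      = c * (if j mod n = i then coeff F j else 0)"
    by simp
  ultimately show "word_of_poly (smult c F) i = c * word_of_poly F i"
    by (simp add: word_of_poly_altdef sum_distrib_left)
qed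

lemma word_of_poly_0: "word_of_poly 0 = (\<lambda>i. 0)"
  unfolding word_of_poly_def by (auto intro!: ext sum.neutral)

lemma word_of_poly_diff: "word_of_poly (F - G) = (\<lambda>i. word_of_poly F i - word_of_poly G i)"
  using word_of_poly_add[of F "smult (-1) G"] word_of_poly_smult[of "-1" G] by simp

lemma word_of_poly_sum: "word_of_poly (\<Sum>x\<in>A. f x) = (\<lambda>i. \<Sum>x\<in>A. word_of_poly (f x) i)"
  by (induct A rule: infinite_finite_induct) (simp_all add: word_of_poly_0 word_of_poly_add)

lemma word_of_poly_monom:
  "word_of_poly (monom c j) = (\<lambda>i. if i < n \<and> i = j mod n then c else 0)"
proof
  fix i
  have "word_of_poly (monom c j) i
      = (if i < n then (\<Sum>l<Suc j. if l mod n = i then coeff (monom c j) l else 0) else 0)"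
    using degree_monom_le[of c j] by (intro word_of_poly_altdef) simp
  also have "\<dots> = (if i < n \<and> i = j mod n then c else 0)"
    by (auto simp: sum.delta' split: if_splits) (auto intro: sum.neutral)
  finally show "word_of_poly (monom c j) i = (if i < n \<and> i = j mod n then c else 0)" .
qed

lemma word_of_poly_in_words: "word_of_poly F \<in> words n"
  unfolding words_def word_of_poly_def by auto

lemma word_of_poly_poly_of_word: "w \<in> words n \<Longrightarrow> word_of_poly (poly_of_word w) = w"
  unfolding poly_of_word_def words_def
  by (rule ext, case_tac "x < n") (auto simp: word_of_poly_sum word_of_poly_monom)

lemma word_of_poly_eqI: "(\<And>i. i < n \<Longrightarrow> word_of_poly F i = word_of_poly G i) \<Longrightarrow> word_of_poly F = word_of_poly G"
  by (rule ext) (metis word_of_poly_def)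

lemma poly_of_word_smult: "poly_of_word (\<lambda>i. c * w i) = smult c (poly_of_word w)"
  unfolding poly_of_word_def by (rule poly_eqI) (simp add: coeff_sum sum_distrib_left)

lemma dvd_monom_diff_monom_mod: "(monom 1 n - 1) dvd (monom (c::'a::comm_ring_1) j - monom c (j mod n))"
proof -
  have "monom c j = monom c (j mod n) * monom 1 n ^ (j div n)"
    by (simp add: mult_monom monom_power)
  moreover have "(monom 1 n - 1) dvd (monom (1::'a) n ^ (j div n) - 1)"
    by (metis power_diff_1_eq dvd_triv_left)
  moreover have "monom c j - monom c (j mod n) = monom c (j mod n) * (monom 1 n ^ (j div n) - 1)"
    using calculation(1) by (simp add: algebra_simps)
  ultimately show ?thesis by (metis dvd_mult)
qed

lemma cyc_cong_refl: "cyc_cong F F"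
  unfolding cyc_cong_def by simp

lemma cyc_cong_sym: "cyc_cong F G \<Longrightarrow> cyc_cong G F"
  unfolding cyc_cong_def by (subst minus_diff_eq[symmetric]) (simp only: dvd_minus_iff)

lemma cyc_cong_trans: "cyc_cong F G \<Longrightarrow> cyc_cong G H \<Longrightarrow> cyc_cong F H"
  unfolding cyc_cong_def by (drule (1) dvd_add) simp

lemma cyc_cong_add: "cyc_cong F G \<Longrightarrow> cyc_cong F' G' \<Longrightarrow> cyc_cong (F + F') (G + G')"
  unfolding cyc_cong_def by (drule (1) dvd_add) (simp add: algebra_simps)

lemma cyc_cong_diff: "cyc_cong F G \<Longrightarrow> cyc_cong F' G' \<Longrightarrow> cyc_cong (F - F') (G - G')"
  unfolding cyc_cong_def by (drule (1) dvd_diff) (simp add: algebra_simps)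

lemma cyc_cong_mult: "cyc_cong F G \<Longrightarrow> cyc_cong F' G' \<Longrightarrow> cyc_cong (F * F') (G * G')"
  unfolding cyc_cong_def
proof -
  assume "(monom 1 n - 1) dvd F - G" "(monom 1 n - 1) dvd F' - G'"
  then have "(monom 1 n - 1) dvd (F - G) * F' + G * (F' - G')" by (intro dvd_add dvd_mult dvd_mult2)
  then show "(monom 1 n - 1) dvd F * F' - G * G'" by (simp add: algebra_simps)
qed

lemma cyc_cong_smult: "cyc_cong F G \<Longrightarrow> cyc_cong (smult c F) (smult c G)"
  using cyc_cong_mult[OF cyc_cong_refl[of "[:c:]"]] by simp

lemma cyc_cong_power: "cyc_cong F G \<Longrightarrow> cyc_cong (F ^ k) (G ^ k)"
  by (induct k) (simp_all add: cyc_cong_refl cyc_cong_mult)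

lemma cyc_cong_sum: "(\<And>x. x \<in> A \<Longrightarrow> cyc_cong (f x) (h x)) \<Longrightarrow> cyc_cong (sum f A) (sum h A)"
  by (induct A rule: infinite_finite_induct) (simp_all add: cyc_cong_refl cyc_cong_add)

lemma cyc_cong_monom: "a mod n = b mod n \<Longrightarrow> cyc_cong (monom c a) (monom c b)"
proof -
  assume "a mod n = b mod n"
  then have "cyc_cong (monom c a) (monom c (a mod n))" "cyc_cong (monom c b) (monom c (a mod n))"
    unfolding cyc_cong_def using dvd_monom_diff_monom_mod by metis+
  then show ?thesis using cyc_cong_sym cyc_cong_trans by blast
qed

lemma cyc_cong_poly_of_word: "cyc_cong F (poly_of_word (word_of_poly F))"
proof -
  have "poly_of_word (word_of_poly F)
      = (\<Sum>i<n. \<Sum>j\<le>degree F. if j mod n = i then monom (coeff F j) i else 0)"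
    unfolding poly_of_word_def word_of_poly_def by (auto simp: monom_sum if_distrib intro!: sum.cong)
  also have "\<dots> = (\<Sum>j\<le>degree F. \<Sum>i<n. if j mod n = i then monom (coeff F j) i else 0)"
    by (rule sum.swap)
  also have "\<dots> = (\<Sum>j\<le>degree F. monom (coeff F j) (j mod n))"
    using n_pos by (simp add: sum.delta)
  finally have "poly_of_word (word_of_poly F) = (\<Sum>j\<le>degree F. monom (coeff F j) (j mod n))" .
  moreover have "cyc_cong (\<Sum>j\<le>degree F. monom (coeff F j) j) (\<Sum>j\<le>degree F. monom (coeff F j) (j mod n))"
    by (intro cyc_cong_sum cyc_cong_monom) simp
  ultimately show ?thesis by (simp add: poly_as_sum_of_monoms)
qed

lemma word_of_poly_monom_n_mult: "word_of_poly (monom 1 n * F) = word_of_poly F"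
proof -
  have "word_of_poly (monom 1 n * F) = word_of_poly (\<Sum>j\<le>degree F. monom (coeff F j) (n + j))"
    by (subst (1) poly_as_sum_of_monoms[symmetric, of F]) (simp add: sum_distrib_left mult_monom)
  also have "\<dots> = word_of_poly (\<Sum>j\<le>degree F. monom (coeff F j) j)"
    by (simp add: word_of_poly_sum word_of_poly_monom)
  finally show ?thesis by (simp add: poly_as_sum_of_monoms)
qed

lemma cyc_cong_iff_word_eq: "cyc_cong F G \<longleftrightarrow> word_of_poly F = word_of_poly G"
proof
  assume "cyc_cong F G"
  then obtain K where "F - G = (monom 1 n - 1) * K" unfolding cyc_cong_def by blast
  then have "F - G = monom 1 n * K - K" by (simp add: algebra_simps)
  then have "word_of_poly (F - G) = (\<lambda>i. 0)"
    by (simp add: word_of_poly_diff word_of_poly_monom_n_mult)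
  then have "\<forall>i. word_of_poly F i - word_of_poly G i = 0" unfolding word_of_poly_diff by metis
  then show "word_of_poly F = word_of_poly G" by auto
next
  assume "word_of_poly F = word_of_poly G"
  then show "cyc_cong F G"
    using cyc_cong_poly_of_word[of F] cyc_cong_poly_of_word[of G] cyc_cong_sym cyc_cong_trans by metis
qed

end


context cyclic_words
begin

text \<open>\<open>conj_poly F\<close> is \<open>F (x\<^sup>-\<^sup>1)\<close>, since \<open>x ^ (n - 1)\<close> is the inverse of \<open>x\<close> modulo \<open>x ^ n - 1\<close>.\<close>

definition conj_poly :: "'a::comm_ring_1 poly \<Rightarrow> 'a poly" where
  "conj_poly F = pcompose F (monom 1 (n - 1))"

lemma conj_poly_mult: "conj_poly (F * G) = conj_poly F * conj_poly G"
  unfolding conj_poly_def by (rule pcompose_mult)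

lemma conj_poly_add: "conj_poly (F + G) = conj_poly F + conj_poly G"
  unfolding conj_poly_def by (rule pcompose_add)

lemma conj_poly_diff: "conj_poly (F - G) = conj_poly F - conj_poly G"
  unfolding conj_poly_def by (rule pcompose_diff)

lemma conj_poly_1: "conj_poly 1 = 1"
  unfolding conj_poly_def by (rule pcompose_1)

lemma conj_poly_0: "conj_poly 0 = 0"
  unfolding conj_poly_def by simp

lemma conj_poly_const: "conj_poly [:c:] = [:c:]"
  unfolding conj_poly_def by simp

lemma conj_poly_smult: "conj_poly (smult c F) = smult c (conj_poly F)"
  unfolding conj_poly_def by (rule pcompose_smult)

lemma conj_poly_power: "conj_poly (F ^ k) = conj_poly F ^ k"
  by (induct k) (simp_all add: conj_poly_1 conj_poly_mult)

lemma conj_poly_monom: "conj_poly (monom c k) = monom c (k * (n - 1))"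
  unfolding conj_poly_def by (rule pcompose_monom_monom)

lemma cyc_cong_pcompose_monom:
  assumes "cyc_cong F G" shows "cyc_cong (pcompose F (monom 1 m)) (pcompose G (monom 1 m))"
proof -
  obtain K where "F - G = (monom 1 n - 1) * K" using assms unfolding cyc_cong_def by blast
  then have "pcompose F (monom 1 m) - pcompose G (monom 1 m)
      = pcompose (monom 1 n - 1) (monom 1 m) * pcompose K (monom 1 m)"
    by (simp only: pcompose_diff [symmetric] pcompose_mult)
  also have "pcompose (monom 1 n - 1) (monom (1::'a) m) = monom 1 n ^ m - 1"
    by (simp add: pcompose_diff pcompose_monom_monom pcompose_1 monom_power mult.commute)
  finally have "pcompose F (monom 1 m) - pcompose G (monom 1 m)
      = (monom 1 n ^ m - 1) * pcompose K (monom 1 m)" .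
  moreover have "(monom 1 n - 1) dvd (monom (1::'a) n ^ m - 1)"
    by (metis power_diff_1_eq dvd_triv_left)
  ultimately show ?thesis unfolding cyc_cong_def by simp
qed

lemma cyc_cong_conj_poly: "cyc_cong F G \<Longrightarrow> cyc_cong (conj_poly F) (conj_poly G)"
  unfolding conj_poly_def by (rule cyc_cong_pcompose_monom)

lemma cyc_cong_pcompose_monom_mod:
  assumes "m mod n = m' mod n"
  shows "cyc_cong (pcompose F (monom 1 m)) (pcompose F (monom 1 m'))"
  unfolding pcompose_monom_eq_sum
  by (intro cyc_cong_sum cyc_cong_monom) (metis assms mod_mult_right_eq)

lemma conj_poly_conj_poly: "cyc_cong (conj_poly (conj_poly F)) (F::'a::comm_ring_1 poly)"
proof -
  have "conj_poly (conj_poly F) = pcompose F (monom 1 ((n - 1) * (n - 1)))"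
    unfolding conj_poly_def by (simp add: pcompose_assoc[symmetric] pcompose_monom_monom)
  moreover have "cyc_cong (pcompose F (monom 1 ((n - 1) * (n - 1)))) (pcompose F (monom 1 1))"
    using minus_one_squared_mod[OF n_pos] by (rule cyc_cong_pcompose_monom_mod)
  moreover have "pcompose F (monom (1::'a) 1) = F"
    by (simp add: monom_Suc monom_0)
  ultimately show ?thesis by simp
qed

lemma word_of_poly_monom_mult:
  assumes "i < n" "j < n" "(j + m) mod n = i"
  shows "word_of_poly (monom 1 m * H) i = word_of_poly H j"
proof -
  have "(i = (m + l) mod n) \<longleftrightarrow> (j = l mod n)" for l
  proof
    assume "i = (m + l) mod n"
    then have "[j = l] (mod n)" using assms cong_add_rcancel_nat unfolding cong_def
      by (metis add.commute)
    then show "j = l mod n" using assms(2) unfolding cong_def by simp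
  next
    assume "j = l mod n"
    then show "i = (m + l) mod n" using assms(3) by (metis mod_add_left_eq add.commute)
  qed
  then show ?thesis using assms
    by (subst (1 2) poly_as_sum_of_monoms[symmetric, of H])
       (simp add: sum_distrib_left mult_monom word_of_poly_sum word_of_poly_monom)
qed

lemma word_of_poly_pcompose_monom:
  assumes "i < n" "j < n" "(j * m) mod n = i" "coprime m n"
  shows "word_of_poly (pcompose F (monom 1 m)) i = word_of_poly F j"
proof -
  have "(i = (l * m) mod n) \<longleftrightarrow> (j = l mod n)" for l
  proof -
    have "(i = (l * m) mod n) \<longleftrightarrow> [l * m = j * m] (mod n)" using assms(3) unfolding cong_def by auto
    also have "\<dots> \<longleftrightarrow> [l = j] (mod n)" using cong_mult_rcancel_nat assms(4) by blast
    also have "\<dots> \<longleftrightarrow> j = l mod n" using assms(2) unfolding cong_def by auto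
    finally show ?thesis .
  qed
  then show ?thesis using assms unfolding pcompose_monom_eq_sum
    by (subst (2) poly_as_sum_of_monoms[symmetric, of F]) (simp add: word_of_poly_sum word_of_poly_monom)
qed

lemma word_of_poly_x_mult: "word_of_poly (monom 1 1 * H) = cyc_shift n (word_of_poly H)"
proof
  fix i
  show "word_of_poly (monom 1 1 * H) i = cyc_shift n (word_of_poly H) i"
  proof (cases "i < n")
    case True
    have "((i + n - 1) mod n + 1) mod n = (i + n - 1 + 1) mod n" by (rule mod_add_left_eq)
    also have "i + n - 1 + 1 = i + n" using n_pos by simp
    finally have "((i + n - 1) mod n + 1) mod n = i" using True by simp
    then show ?thesis unfolding cyc_shift_def using True n_pos by (simp add: word_of_poly_monom_mult)
  next
    case False
    then show ?thesis unfolding cyc_shift_def word_of_poly_def by simp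
  qed
qed

text \<open>The monomial \<open>x ^ (i + j * (n - 1))\<close> reduces to \<open>x ^ 0\<close> exactly when \<open>i = j\<close>.\<close>

lemma code_inner_eq_word_of_poly:
  assumes "u \<in> words n" "v \<in> words n"
  shows "code_inner n u v = word_of_poly (poly_of_word u * conj_poly (poly_of_word v)) 0"
proof -
  have exp_mod: "(i + j * (n - 1)) mod n = 0 \<longleftrightarrow> j = i" if "i < n" "j < n" for i j
  proof
    assume h: "(i + j * (n - 1)) mod n = 0"
    have "i + j * (n - 1) + j = i + j * n" using n_pos by (cases n) (auto simp: algebra_simps)
    then have "i = (i + j * (n - 1) + j) mod n" using that by (simp only:) simp
    also have "\<dots> = ((i + j * (n - 1)) mod n + j) mod n" by (rule mod_add_left_eq[symmetric])
    finally show "j = i" using h that by simp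
  next
    assume "j = i"
    then have "i + j * (n - 1) = i * n" using n_pos by (cases n) (auto simp: algebra_simps)
    then show "(i + j * (n - 1)) mod n = 0" by simp
  qed
  have "poly_of_word u * conj_poly (poly_of_word v) = (\<Sum>i<n. \<Sum>j<n. monom (u i * v j) (i + j * (n - 1)))"
    unfolding poly_of_word_def conj_poly_def
    by (simp only: pcompose_sum pcompose_monom_monom sum_product mult_monom)
  then have "word_of_poly (poly_of_word u * conj_poly (poly_of_word v)) 0
      = (\<Sum>i<n. \<Sum>j<n. if 0 < n \<and> 0 = (i + j * (n - 1)) mod n then u i * v j else 0)"
    by (simp only: word_of_poly_sum word_of_poly_monom)
  also have "\<dots> = (\<Sum>i<n. \<Sum>j<n. if j = i then u i * v j else 0)"
    using n_pos exp_mod by (intro sum.cong refl) auto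
  finally show ?thesis unfolding code_inner_def by simp
qed

lemma cyclic_code_mult_closed:
  assumes "cyclic_code n C" "word_of_poly F \<in> C" shows "word_of_poly (G * F) \<in> C"
proof (induct G)
  case 0
  have "(\<lambda>i. 0) \<in> C" using assms(1) unfolding cyclic_code_def linear_code_def by blast
  then show ?case by (simp add: word_of_poly_0)
next
  case (pCons a G)
  have "pCons a G * F = smult a F + monom 1 1 * (G * F)"
    by (simp add: monom_Suc monom_0)
  moreover have "word_of_poly (smult a F) \<in> C"
    using assms unfolding cyclic_code_def linear_code_def word_of_poly_smult by blast
  moreover have "word_of_poly (monom 1 1 * (G * F)) \<in> C"
    using pCons(2) assms(1) unfolding word_of_poly_x_mult cyclic_code_def by blast
  ultimately show ?case
    using assms(1) unfolding cyclic_code_def linear_code_def by (simp only: word_of_poly_add)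
qed

text \<open>A word orthogonal to a cyclic code is orthogonal to all cyclic shifts of its codewords, so the
  whole product \<open>u(x) F(x\<^sup>-\<^sup>1)\<close> vanishes modulo \<open>x ^ n - 1\<close>.\<close>

lemma dual_code_orthogonal:
  assumes "cyclic_code n C" "u \<in> dual_code n C" "word_of_poly F \<in> C"
  shows "cyc_cong (poly_of_word u * conj_poly F) 0"
  unfolding cyc_cong_iff_word_eq word_of_poly_0
proof
  fix k
  show "word_of_poly (poly_of_word u * conj_poly F) k = 0"
  proof (cases "k < n")
    case False
    then show ?thesis unfolding word_of_poly_def by simp
  next
    case True
    define F' where "F' = monom 1 k * F"
    have "word_of_poly F' \<in> C" unfolding F'_def using cyclic_code_mult_closed assms(1,3) by blast
    then have "code_inner n u (word_of_poly F') = 0" using assms(2) unfolding dual_code_def by blast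
    moreover have "u \<in> words n" using assms(2) unfolding dual_code_def by blast
    ultimately have "word_of_poly (poly_of_word u * conj_poly (poly_of_word (word_of_poly F'))) 0 = 0"
      using code_inner_eq_word_of_poly word_of_poly_in_words by metis
    moreover have "cyc_cong (poly_of_word u * conj_poly (poly_of_word (word_of_poly F')))
        (poly_of_word u * conj_poly F')"
      by (intro cyc_cong_mult cyc_cong_refl cyc_cong_conj_poly cyc_cong_sym[OF cyc_cong_poly_of_word])
    ultimately have "word_of_poly (poly_of_word u * conj_poly F') 0 = 0" using cyc_cong_iff_word_eq by metis
    moreover have "poly_of_word u * conj_poly F' = monom 1 (k * (n - 1)) * (poly_of_word u * conj_poly F)"
      unfolding F'_def conj_poly_mult conj_poly_monom by (simp add: algebra_simps)
    moreover have "k + k * (n - 1) = k * n" using n_pos by (cases n) (auto simp: algebra_simps)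
    then have "word_of_poly (monom 1 (k * (n - 1)) * (poly_of_word u * conj_poly F)) 0
        = word_of_poly (poly_of_word u * conj_poly F) k"
      using True n_pos by (intro word_of_poly_monom_mult) auto
    ultimately show ?thesis by simp
  qed
qed

end


section \<open>Frobenius modulo the maximal ideal\<close>

context nilpotent_maximal_ideal
begin

definition coeffs_in_M :: "'a poly \<Rightarrow> bool" where
  "coeffs_in_M F \<longleftrightarrow> (\<forall>i. coeff F i \<in> M)"

lemma coeffs_in_M_0: "coeffs_in_M 0"
  unfolding coeffs_in_M_def by simp

lemma coeffs_in_M_const: "a \<in> M \<Longrightarrow> coeffs_in_M [:a:]"
  unfolding coeffs_in_M_def by (simp add: coeff_pCons split: nat.split)

lemma coeffs_in_M_add: "coeffs_in_M A \<Longrightarrow> coeffs_in_M B \<Longrightarrow> coeffs_in_M (A + B)"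
  unfolding coeffs_in_M_def by (simp add: M_add)

lemma coeffs_in_M_mult_left: "coeffs_in_M A \<Longrightarrow> coeffs_in_M (B * A)"
  unfolding coeffs_in_M_def by (auto simp: coeff_mult intro!: M_sum M_mult_left)

lemma coeffs_in_M_mult_right: "coeffs_in_M A \<Longrightarrow> coeffs_in_M (A * B)"
  using coeffs_in_M_mult_left by (metis mult.commute)

lemma coeffs_in_M_sum: "(\<And>i. i \<in> A \<Longrightarrow> coeffs_in_M (f i)) \<Longrightarrow> coeffs_in_M (sum f A)"
  by (induct A rule: infinite_finite_induct) (auto intro: coeffs_in_M_add coeffs_in_M_0)

lemma coeffs_in_M_trans: "coeffs_in_M (A - B) \<Longrightarrow> coeffs_in_M (B - C) \<Longrightarrow> coeffs_in_M (A - C)"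
  using coeffs_in_M_add[of "A - B" "B - C"] by simp

lemma coeffs_in_M_power_diff: "coeffs_in_M (X - Y) \<Longrightarrow> coeffs_in_M (X ^ k - Y ^ k)"
proof (induct k)
  case 0 then show ?case by (simp add: coeffs_in_M_0)
next
  case (Suc k)
  have "X ^ Suc k - Y ^ Suc k = X * (X ^ k - Y ^ k) + (X - Y) * Y ^ k" by (simp add: algebra_simps)
  then show ?case using Suc coeffs_in_M_add coeffs_in_M_mult_left coeffs_in_M_mult_right by metis
qed

lemma coeffs_in_M_pcompose: "coeffs_in_M D \<Longrightarrow> coeffs_in_M (pcompose D s)"
proof (induct D)
  case 0 then show ?case by (simp add: coeffs_in_M_0)
next
  case (pCons a D)
  then have "a \<in> M" "coeffs_in_M D"
    unfolding coeffs_in_M_def by (metis coeff_pCons_0, metis coeff_pCons_Suc)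
  with pCons(2) show ?case
    by (simp add: pcompose_pCons coeffs_in_M_add coeffs_in_M_mult_left coeffs_in_M_const)
qed

lemma coeffs_in_M_add_power_prime:
  assumes p: "prime p" "of_nat p \<in> M"
  shows "coeffs_in_M ((A + B) ^ p - (A ^ p + B ^ p))"
proof -
  let ?t = "\<lambda>k. of_nat (p choose k) * A ^ k * B ^ (p - k)"
  have "p > 0" using p(1) prime_gt_0_nat by blast
  then have "{..p} = {0, p} \<union> {1..<p}" by auto
  then have "(A + B) ^ p = (\<Sum>k\<in>{0, p} \<union> {1..<p}. ?t k)" by (simp only: binomial_ring)
  also have "\<dots> = (\<Sum>k\<in>{0, p}. ?t k) + (\<Sum>k\<in>{1..<p}. ?t k)"
    by (rule sum.union_disjoint) auto
  finally have "(A + B) ^ p = (\<Sum>k\<in>{0, p}. ?t k) + (\<Sum>k\<in>{1..<p}. ?t k)" .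
  moreover have "(\<Sum>k\<in>{0, p}. ?t k) = A ^ p + B ^ p"
    using \<open>p > 0\<close> by (simp add: add.commute)
  moreover have "coeffs_in_M (?t k)" if "k \<in> {1..<p}" for k
  proof -
    have "p dvd (p choose k)" using that dvd_choose_prime[of k p] p(1) by auto
    then obtain c where "p choose k = p * c" by blast
    then have "?t k = [:of_nat p:] * (of_nat c * A ^ k * B ^ (p - k))"
      by (simp add: algebra_simps of_nat_poly)
    then show ?thesis using coeffs_in_M_mult_right coeffs_in_M_const p(2) by metis
  qed
  then have "coeffs_in_M (\<Sum>k\<in>{1..<p}. ?t k)" by (rule coeffs_in_M_sum)
  ultimately show ?thesis by simp
qed

lemma coeffs_in_M_add_power_prime_power:
  assumes "prime p" "of_nat p \<in> M"
  shows "coeffs_in_M ((A + B) ^ (p ^ s) - (A ^ (p ^ s) + B ^ (p ^ s)))"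
proof (induct s)
  case 0 then show ?case by (simp add: coeffs_in_M_0)
next
  case (Suc s)
  have "coeffs_in_M (((A + B) ^ (p ^ s)) ^ p - (A ^ (p ^ s) + B ^ (p ^ s)) ^ p)"
    using coeffs_in_M_power_diff[OF Suc] .
  moreover have "coeffs_in_M ((A ^ (p ^ s) + B ^ (p ^ s)) ^ p - ((A ^ (p ^ s)) ^ p + (B ^ (p ^ s)) ^ p))"
    using assms by (rule coeffs_in_M_add_power_prime)
  ultimately show ?case
    using coeffs_in_M_trans by (simp add: power_mult[symmetric] mult.commute)
qed

lemma frobenius_prime_power:
  assumes p: "prime p" "of_nat p \<in> M" and coeffs: "\<forall>i. coeff F i ^ (p ^ s) - coeff F i \<in> M"
  shows "coeffs_in_M (F ^ (p ^ s) - pcompose F (monom 1 (p ^ s)))"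
  using coeffs
proof (induct F)
  case 0
  have "p ^ s > 0" using p(1) prime_gt_0_nat by simp
  then show ?case by (simp add: coeffs_in_M_0 zero_power)
next
  case (pCons a F)
  let ?P = "p ^ s"
  have "a ^ ?P - a \<in> M" "\<forall>i. coeff F i ^ ?P - coeff F i \<in> M"
    using pCons(3) by (metis coeff_pCons_0, metis coeff_pCons_Suc)
  with pCons(2) have IH: "coeffs_in_M (F ^ ?P - pcompose F (monom 1 ?P))" by blast
  have x: "pCons a F = [:a:] + monom 1 1 * F" by (simp add: monom_Suc monom_0)
  have "coeffs_in_M ((pCons a F) ^ ?P - ([:a:] ^ ?P + (monom 1 1 * F) ^ ?P))"
    unfolding x using p by (rule coeffs_in_M_add_power_prime_power)
  moreover have "[:a:] ^ ?P + (monom 1 1 * F) ^ ?P - pcompose (pCons a F) (monom 1 ?P)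
      = [:a ^ ?P - a:] + monom 1 ?P * (F ^ ?P - pcompose F (monom 1 ?P))"
    by (simp add: power_mult_distrib monom_power poly_const_pow pcompose_pCons algebra_simps)
  moreover have "coeffs_in_M [:a ^ ?P - a:]" using \<open>a ^ ?P - a \<in> M\<close> by (rule coeffs_in_M_const)
  ultimately show ?case
    using IH coeffs_in_M_add coeffs_in_M_mult_left coeffs_in_M_trans by metis
qed

end

context finite_residue_field
begin

lemma power_q_power_diff_in_M: "c ^ (q ^ j) - c \<in> M"
proof (induct j)
  case 0 then show ?case by simp
next
  case (Suc j)
  have "(c ^ (q ^ j)) ^ q - c ^ q \<in> M" using power_diff_in_M[OF Suc] .
  then have "(c ^ (q ^ j)) ^ q - c \<in> M" using power_q_diff_in_M[of c] M_add by fastforce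
  then show ?case by (simp add: power_mult[symmetric] mult.commute)
qed

text \<open>Divide out one root at a time: the other points of \<open>T\<close> remain roots of the quotient modulo
  \<open>M\<close> because their differences to the removed root are units.\<close>

lemma coeffs_in_M_if_vanishes:
  assumes "finite T" "T \<subseteq> Reps" "\<forall>i\<ge>card T. coeff D i = 0" "\<forall>c\<in>T. poly D c \<in> M"
  shows "coeffs_in_M D"
  using assms
proof (induct T arbitrary: D rule: finite_induct)
  case empty then show ?case by (simp add: coeffs_in_M_def)
next
  case (insert c T)
  define H where "H = synthetic_div D c"
  have D: "D = [:-c, 1:] * H + [:poly D c:]" unfolding H_def by (rule synthetic_div_correct'[symmetric])
  have "degree D \<le> card T" using insert(1,2,5) by (intro degree_le) auto
  then have "\<forall>i\<ge>card T. coeff H i = 0"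
  proof (cases "degree D = 0")
    case True
    then have "H = 0" unfolding H_def using synthetic_div_eq_0_iff by blast
    then show ?thesis by simp
  next
    case False
    with \<open>degree D \<le> card T\<close> have "degree H < card T" unfolding H_def degree_synthetic_div by simp
    then show ?thesis by (auto intro: coeff_eq_0)
  qed
  moreover have "poly H c' \<in> M" if c': "c' \<in> T" for c'
  proof -
    have "poly D c' = (c' - c) * poly H c' + poly D c" by (subst D) (simp add: algebra_simps)
    moreover have "poly D c' \<in> M" "poly D c \<in> M" using insert(6) c' by auto
    ultimately have "(c' - c) * poly H c' \<in> M" using M_diff by (metis add_diff_cancel_right')
    moreover have "c' - c \<notin> M" using Reps_eqI insert(2,4) c' by blast
    ultimately show ?thesis using mult_not_in_M by blast
  qed
  ultimately have "coeffs_in_M H" using insert(3)[of H] insert(4) by blast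
  moreover have "coeffs_in_M [:poly D c:]" using insert(6) by (simp add: coeffs_in_M_const)
  ultimately show ?case by (subst D) (intro coeffs_in_M_add coeffs_in_M_mult_left)
qed

lemma coeff_prod_linear:
  assumes "finite T"
  shows "coeff (\<Prod>c\<in>T. [:-c, 1:]) (card T) = 1" "\<forall>i>card T. coeff (\<Prod>c\<in>T. [:-c, 1:]) i = 0"
  using assms
proof (induct T rule: finite_induct)
  case empty
  { case 1 show ?case by simp }
  { case 2 show ?case by (auto simp: coeff_1) }
next
  case (insert c T)
  then have prod: "(\<Prod>c\<in>insert c T. [:-c, 1:]) = smult (-c) (\<Prod>c\<in>T. [:-c, 1:]) + pCons 0 (\<Prod>c\<in>T. [:-c, 1:])"
    by simp
  { case 1 show ?case unfolding prod using insert by simp }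
  { case 2 show ?case unfolding prod using insert by (auto simp: coeff_pCons split: nat.split) }
qed

text \<open>\<open>\<Prod>\<^sub>c (X - c) \<equiv> X ^ q - X\<close> modulo \<open>M\<close>: both sides are monic of degree \<open>q\<close> and vanish at
  every representative.\<close>

lemma coeffs_in_M_prod_linear_Reps: "coeffs_in_M ((\<Prod>c\<in>Reps. [:-c, 1:]) - (monom 1 q - monom 1 1))"
proof (rule coeffs_in_M_if_vanishes[OF finite_Reps order.refl])
  show "\<forall>i\<ge>card Reps. coeff ((\<Prod>c\<in>Reps. [:-c, 1:]) - (monom 1 q - monom 1 1)) i = 0"
    using coeff_prod_linear[OF finite_Reps] q_ge_2 unfolding card_Reps by (auto simp: le_less)
  show "\<forall>c\<in>Reps. poly ((\<Prod>c\<in>Reps. [:-c, 1:]) - (monom 1 q - monom 1 1)) c \<in> M"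
  proof
    fix c assume "c \<in> Reps"
    then have "poly (\<Prod>c\<in>Reps. [:-c, 1:]) c = 0"
      unfolding poly_prod using finite_Reps by (intro prod_zero) auto
    then have "poly ((\<Prod>c\<in>Reps. [:-c, 1:]) - (monom 1 q - monom 1 1)) c = - (c ^ q - c)"
      by (simp add: poly_monom)
    then show "poly ((\<Prod>c\<in>Reps. [:-c, 1:]) - (monom 1 q - monom 1 1)) c \<in> M"
      using M_uminus[OF power_q_diff_in_M[of c]] by simp
  qed
qed

end


section \<open>The ideal \<open>J\<close> generated by \<open>g\<close>\<close>

locale cyclic_code_setting = finite_residue_field g e q + cyclic_words n
  for g :: "'a::comm_ring_1" and e q n +
  fixes p r :: nat
  assumes prime_p: "prime p" and q_eq: "q = p ^ r" and coprime_n_p: "coprime n p"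
begin

lemma of_nat_p_in_M: "of_nat p \<in> M"
proof (rule ccontr)
  assume "of_nat p \<notin> M"
  then have "(of_nat p :: 'a) ^ r \<notin> M" by (rule power_not_in_M)
  then show False using of_nat_q_in_M unfolding q_eq by (simp add: of_nat_power)
qed

lemma coprime_q_power_n: "coprime (q ^ j) n"
  using coprime_n_p unfolding q_eq by (simp add: coprime_commute flip: power_mult)

lemma frobenius: "coeffs_in_M (F ^ (q ^ j) - pcompose F (monom 1 (q ^ j)))"
proof -
  have "q ^ j = p ^ (r * j)" unfolding q_eq by (simp add: power_mult)
  then show ?thesis
    using frobenius_prime_power[OF prime_p of_nat_p_in_M] power_q_power_diff_in_M by metis
qed

text \<open>\<open>in_J F\<close> says that \<open>F\<close> lies in the ideal \<open>J = g R[x]/(x ^ n - 1)\<close>, the kernel of reduction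
  to \<open>K[x]/(x ^ n - 1)\<close>.\<close>

definition in_J :: "'a poly \<Rightarrow> bool" where
  "in_J F \<longleftrightarrow> (\<forall>i. word_of_poly F i \<in> M)"

lemma in_J_if_coeffs_in_M: "coeffs_in_M F \<Longrightarrow> in_J F"
  unfolding coeffs_in_M_def in_J_def word_of_poly_def by (auto intro!: M_sum)

lemma in_J_0: "in_J 0"
  unfolding in_J_def by (simp add: word_of_poly_0)

lemma in_J_add: "in_J A \<Longrightarrow> in_J B \<Longrightarrow> in_J (A + B)"
  unfolding in_J_def by (simp add: word_of_poly_add M_add)

lemma in_J_diff: "in_J A \<Longrightarrow> in_J B \<Longrightarrow> in_J (A - B)"
  unfolding in_J_def by (simp add: word_of_poly_diff M_diff)

lemma in_J_cyc_cong: "in_J A \<Longrightarrow> cyc_cong A B \<Longrightarrow> in_J B"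
  unfolding in_J_def by (simp add: cyc_cong_iff_word_eq)

lemma in_J_diff_if_cyc_cong: "cyc_cong A B \<Longrightarrow> in_J (A - B)"
  unfolding in_J_def by (simp add: cyc_cong_iff_word_eq word_of_poly_diff)

lemma in_J_iff_cyc_cong_smult: "in_J F \<longleftrightarrow> (\<exists>Z. cyc_cong F (smult g Z))"
proof
  assume "in_J F"
  then obtain z where "z \<in> words n" "word_of_poly F = (\<lambda>i. g * z i)"
    using words_factor[OF word_of_poly_in_words] unfolding in_J_def mem_M_iff by metis
  then have "word_of_poly F = word_of_poly (smult g (poly_of_word z))"
    by (simp add: word_of_poly_smult word_of_poly_poly_of_word)
  then show "\<exists>Z. cyc_cong F (smult g Z)" unfolding cyc_cong_iff_word_eq by blast
next
  assume "\<exists>Z. cyc_cong F (smult g Z)"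
  moreover have "in_J (smult g Z)" for Z
    unfolding in_J_def word_of_poly_smult using M_mult_right g_in_M by blast
  ultimately show "in_J F" using in_J_cyc_cong cyc_cong_sym by metis
qed

lemma in_J_mult_right: "in_J A \<Longrightarrow> in_J (A * B)"
proof -
  assume "in_J A"
  then obtain Z where "cyc_cong A (smult g Z)" using in_J_iff_cyc_cong_smult by blast
  then have "cyc_cong (A * B) (smult g (Z * B))" using cyc_cong_mult[OF _ cyc_cong_refl] by fastforce
  then show ?thesis using in_J_iff_cyc_cong_smult by blast
qed

lemma in_J_mult_left: "in_J A \<Longrightarrow> in_J (B * A)"
  using in_J_mult_right by (metis mult.commute)

lemma in_J_conj_poly: "in_J A \<Longrightarrow> in_J (conj_poly A)"
proof -
  assume "in_J A"
  then obtain Z where "cyc_cong A (smult g Z)" using in_J_iff_cyc_cong_smult by blast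
  then have "cyc_cong (conj_poly A) (smult g (conj_poly Z))"
    using cyc_cong_conj_poly conj_poly_smult by metis
  then show ?thesis using in_J_iff_cyc_cong_smult by blast
qed

lemma in_J_power_e: "in_J A \<Longrightarrow> cyc_cong (A ^ e) 0"
proof -
  assume "in_J A"
  then obtain Z where "cyc_cong A (smult g Z)" using in_J_iff_cyc_cong_smult by blast
  then have "cyc_cong (A ^ e) (smult g Z ^ e)" by (rule cyc_cong_power)
  then show ?thesis by (simp add: smult_power power_e_eq_0)
qed

lemma idempotent_in_J_eq_0:
  assumes "in_J Y" "cyc_cong (Y * Y) Y" shows "cyc_cong Y 0"
proof -
  have "cyc_cong (Y ^ Suc k) Y" for k
  proof (induct k)
    case 0 then show ?case by (simp add: cyc_cong_refl)
  next
    case (Suc k)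
    have "cyc_cong (Y ^ Suc (Suc k)) (Y * Y)" using cyc_cong_mult[OF cyc_cong_refl Suc] by simp
    then show ?case using assms(2) cyc_cong_trans by blast
  qed
  then have "cyc_cong (Y ^ e) Y" using e_pos by (metis Suc_pred)
  then show ?thesis using in_J_power_e[OF assms(1)] cyc_cong_sym cyc_cong_trans by blast
qed

lemma in_J_if_in_J_pcompose_monom:
  assumes "in_J (pcompose F (monom 1 m))" "coprime m n" shows "in_J F"
  unfolding in_J_def
proof
  fix j
  show "word_of_poly F j \<in> M"
  proof (cases "j < n")
    case True
    have "word_of_poly (pcompose F (monom 1 m)) ((j * m) mod n) = word_of_poly F j"
      using word_of_poly_pcompose_monom[OF _ True refl assms(2)] n_pos by simp
    then show ?thesis using assms(1) unfolding in_J_def by metis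
  next
    case False
    then show ?thesis unfolding word_of_poly_def by simp
  qed
qed

text \<open>\<open>R[x]/(x ^ n - 1)\<close> modulo \<open>J\<close> has no nilpotents: a large power \<open>F ^ q\<^sup>k\<close> is congruent to
  \<open>F (x ^ q\<^sup>k)\<close>, and \<open>x \<mapsto> x ^ q\<^sup>k\<close> permutes the exponents modulo \<open>n\<close>.\<close>

lemma in_J_if_power_in_J:
  assumes "in_J (F ^ k)" shows "in_J F"
proof -
  have "(2::nat) ^ k \<le> q ^ k" using q_ge_2 by (rule power_mono) simp
  then have "k < q ^ k" using less_exp[of k] by linarith
  then have "F ^ (q ^ k) = F ^ k * F ^ (q ^ k - k)" by (simp add: power_add[symmetric])
  then have "in_J (F ^ (q ^ k))" using in_J_mult_right assms by metis
  moreover have "in_J (F ^ (q ^ k) - pcompose F (monom 1 (q ^ k)))"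
    by (rule in_J_if_coeffs_in_M[OF frobenius])
  ultimately have "in_J (pcompose F (monom 1 (q ^ k)))"
    using in_J_diff by fastforce
  then show ?thesis using coprime_q_power_n by (rule in_J_if_in_J_pcompose_monom)
qed

end


section \<open>Only the trivial code when \<open>q ^ j \<equiv> -1 (mod n)\<close>\<close>

context nilpotent_maximal_ideal
begin

lemma code_inner_trivial_code:
  assumes "even e" "u \<in> trivial_code n g e" "v \<in> trivial_code n g e"
  shows "code_inner n u v = 0"
proof -
  obtain a b where "u = (\<lambda>i. g ^ (e div 2) * a i)" "v = (\<lambda>i. g ^ (e div 2) * b i)"
    using assms(2,3) unfolding trivial_code_def by blast
  moreover have "e div 2 + e div 2 = e" using assms(1) by (elim evenE) simp
  then have "g ^ (e div 2) * g ^ (e div 2) = 0" by (simp add: power_e_eq_0 flip: power_add)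
  ultimately show ?thesis unfolding code_inner_def by (simp add: algebra_simps)
qed

lemma self_dual_eq_trivial_code:
  assumes "even e" "self_dual n C" "C \<subseteq> trivial_code n g e"
  shows "C = trivial_code n g e"
proof -
  have "trivial_code n g e \<subseteq> dual_code n C"
  proof
    fix x assume x: "x \<in> trivial_code n g e"
    then have "x \<in> words n" unfolding trivial_code_def words_def by auto
    then show "x \<in> dual_code n C"
      using code_inner_trivial_code[OF assms(1) x] assms(3) unfolding dual_code_def by blast
  qed
  then show ?thesis using assms(2,3) unfolding self_dual_def by blast
qed

end

context cyclic_code_setting
begin

text \<open>If \<open>q ^ j \<equiv> -1 (mod n)\<close>, then \<open>F (x\<^sup>-\<^sup>1) \<equiv> F (x ^ q\<^sup>j) \<equiv> F ^ q\<^sup>j\<close> modulo \<open>J\<close>, so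
  \<open>F F (x\<^sup>-\<^sup>1) \<in> J\<close> forces the power \<open>F ^ (q\<^sup>j + 1)\<close> into \<open>J\<close>.\<close>

lemma in_J_if_in_J_mult_conj:
  assumes minus_one: "q ^ j mod n = n - 1" and "in_J (F * conj_poly F)"
  shows "in_J F"
proof -
  let ?Q = "q ^ j"
  have "cyc_cong (pcompose F (monom 1 ?Q)) (conj_poly F)"
    unfolding conj_poly_def using minus_one n_pos by (intro cyc_cong_pcompose_monom_mod) simp
  then have "in_J (F * (pcompose F (monom 1 ?Q) - conj_poly F))"
    by (intro in_J_mult_left in_J_diff_if_cyc_cong)
  moreover have "in_J (F * (F ^ ?Q - pcompose F (monom 1 ?Q)))"
    by (intro in_J_mult_left in_J_if_coeffs_in_M frobenius)
  ultimately have "in_J (F * (F ^ ?Q - pcompose F (monom 1 ?Q))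
      + F * (pcompose F (monom 1 ?Q) - conj_poly F) + F * conj_poly F)"
    using assms(2) by (intro in_J_add)
  moreover have "F * (F ^ ?Q - pcompose F (monom 1 ?Q))
      + F * (pcompose F (monom 1 ?Q) - conj_poly F) + F * conj_poly F = F ^ Suc ?Q"
    by (simp add: algebra_simps)
  ultimately have "in_J (F ^ Suc ?Q)" by simp
  then show ?thesis by (rule in_J_if_power_in_J)
qed

lemma self_dual_codeword_divisible_Suc:
  assumes minus_one: "q ^ j mod n = n - 1" and "cyclic_code n C" "self_dual n C"
    and "2 * t < e" and w: "w \<in> C" "\<And>l. \<exists>y. w l = g ^ t * y"
  shows "\<exists>y. w l = g ^ Suc t * y"
proof -
  have "w \<in> words n" using assms(2) w(1) unfolding cyclic_code_def linear_code_def by blast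
  then obtain w' where w': "w' \<in> words n" "w = (\<lambda>l. g ^ t * w' l)" using words_factor w(2) by blast
  define F where "F = poly_of_word w'"
  have "word_of_poly (poly_of_word w) \<in> C" using w(1) \<open>w \<in> words n\<close> by (simp add: word_of_poly_poly_of_word)
  moreover have "w \<in> dual_code n C" using assms(3) w(1) unfolding self_dual_def by blast
  ultimately have "cyc_cong (poly_of_word w * conj_poly (poly_of_word w)) 0"
    using dual_code_orthogonal[OF assms(2)] by blast
  moreover have "poly_of_word w * conj_poly (poly_of_word w) = smult (g ^ (2 * t)) (F * conj_poly F)"
    unfolding F_def w'(2) poly_of_word_smult conj_poly_smult by (simp add: power_add[symmetric] mult_2)
  ultimately have "word_of_poly (smult (g ^ (2 * t)) (F * conj_poly F)) = (\<lambda>i. 0)"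
    by (simp add: cyc_cong_iff_word_eq word_of_poly_0)
  then have "g ^ (2 * t) * word_of_poly (F * conj_poly F) i = 0" for i
    using fun_cong[of _ _ i] by (fastforce simp: word_of_poly_smult)
  then have "in_J (F * conj_poly F)"
    unfolding in_J_def using in_M_if_power_mult_eq_0[OF _ assms(4)] by blast
  then have "in_J F" by (rule in_J_if_in_J_mult_conj[OF minus_one])
  then have "w' l \<in> M" using w'(1) unfolding in_J_def F_def by (simp add: word_of_poly_poly_of_word)
  then obtain y where "w' l = g * y" by (auto simp: mem_M_iff)
  then show ?thesis using w'(2) by (auto simp: algebra_simps)
qed

theorem self_dual_eq_trivial_code_if_minus_one_power:
  assumes minus_one: "q ^ j mod n = n - 1" and "even e" "cyclic_code n C" "self_dual n C"
  shows "C = trivial_code n g e"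
proof -
  have divisible: "\<forall>w\<in>C. \<forall>l. \<exists>y. w l = g ^ t * y" if "t \<le> e div 2" for t
    using that
  proof (induct t)
    case 0 show ?case by simp
  next
    case (Suc t)
    then have "2 * t < e" using assms(2) by auto
    with Suc show ?case using self_dual_codeword_divisible_Suc[OF minus_one assms(3,4)] by auto
  qed
  have "C \<subseteq> trivial_code n g e"
  proof
    fix w assume "w \<in> C"
    moreover have "C \<subseteq> words n" using assms(3) unfolding cyclic_code_def linear_code_def by blast
    ultimately obtain w' where "w' \<in> words n" "w = (\<lambda>l. g ^ (e div 2) * w' l)"
      using words_factor divisible[OF order.refl] by blast
    then show "w \<in> trivial_code n g e" unfolding trivial_code_def by blast
  qed
  then show ?thesis using self_dual_eq_trivial_code assms(2,4) by blast
qed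

end


section \<open>A non-trivial self-dual code otherwise\<close>

context cyclic_code_setting
begin

definition cong_J :: "'a poly \<Rightarrow> 'a poly \<Rightarrow> bool" where
  "cong_J A B \<longleftrightarrow> in_J (A - B)"

lemma cong_J_refl: "cong_J A A"
  unfolding cong_J_def by (simp add: in_J_0)

lemma cong_J_sym: "cong_J A B \<Longrightarrow> cong_J B A"
  unfolding cong_J_def using in_J_diff[OF in_J_0, of "A - B"] by simp

lemma cong_J_trans: "cong_J A B \<Longrightarrow> cong_J B C \<Longrightarrow> cong_J A C"
  unfolding cong_J_def using in_J_add[of "A - B" "B - C"] by simp

lemma cong_J_diff: "cong_J A B \<Longrightarrow> cong_J A' B' \<Longrightarrow> cong_J (A - A') (B - B')"
  unfolding cong_J_def using in_J_diff[of "A - B" "A' - B'"] by (simp add: algebra_simps)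

lemma cong_J_mult: "cong_J A B \<Longrightarrow> cong_J A' B' \<Longrightarrow> cong_J (A * A') (B * B')"
  unfolding cong_J_def
proof -
  assume "in_J (A - B)" "in_J (A' - B')"
  then have "in_J ((A - B) * A' + B * (A' - B'))" by (intro in_J_add in_J_mult_right in_J_mult_left)
  moreover have "(A - B) * A' + B * (A' - B') = A * A' - B * B'" by (simp add: algebra_simps)
  ultimately show "in_J (A * A' - B * B')" by simp
qed

lemma cong_J_power: "cong_J A B \<Longrightarrow> cong_J (A ^ k) (B ^ k)"
  by (induct k) (simp_all add: cong_J_refl cong_J_mult)

lemma cong_J_if_cyc_cong: "cyc_cong A B \<Longrightarrow> cong_J A B"
  unfolding cong_J_def by (rule in_J_diff_if_cyc_cong)

lemma cong_J_conj_poly: "cong_J A B \<Longrightarrow> cong_J (conj_poly A) (conj_poly B)"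
  unfolding cong_J_def using in_J_conj_poly conj_poly_diff by metis

text \<open>Apply \<open>H\<close> to \<open>b = E - E E (x\<^sup>-\<^sup>1)\<close>, for which \<open>b b (x\<^sup>-\<^sup>1)\<close> is a multiple of \<open>E\<^sup>2 - E\<close>.\<close>

lemma idempotent_cong_J_mult_conj:
  assumes H: "\<And>b. in_J (b * conj_poly b) \<Longrightarrow> in_J b"
    and idem: "cong_J (E * E) E"
  shows "cong_J E (E * conj_poly E)"
proof -
  define E' where "E' = conj_poly E"
  define b where "b = E - E * E'"
  have "conj_poly b = E' - E' * conj_poly E'" unfolding b_def E'_def by (simp add: conj_poly_diff conj_poly_mult)
  moreover have "cong_J (conj_poly E') E" unfolding E'_def by (rule cong_J_if_cyc_cong[OF conj_poly_conj_poly])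
  ultimately have "cong_J (conj_poly b) (E' - E * E')"
    by (metis cong_J_diff cong_J_mult cong_J_refl mult.commute)
  then have "cong_J (b * conj_poly b) (b * (E' - E * E'))" by (rule cong_J_mult[OF cong_J_refl])
  moreover have "b * (E' - E * E') = (E * E - E) * (E' * E' - E')" unfolding b_def by (simp add: algebra_simps)
  then have "in_J (b * (E' - E * E'))" using idem unfolding cong_J_def by (simp add: in_J_mult_right)
  ultimately have "in_J (b * conj_poly b)" unfolding cong_J_def using in_J_add by (metis diff_add_cancel)
  then show ?thesis unfolding cong_J_def b_def E'_def by (rule H)
qed

lemma idempotent_cong_J_conj:
  assumes H: "\<And>b. in_J (b * conj_poly b) \<Longrightarrow> in_J b"
    and idem: "cong_J (E * E) E"
  shows "cong_J E (conj_poly E)"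
proof -
  have "cong_J (conj_poly E * conj_poly E) (conj_poly E)"
    using cong_J_conj_poly[OF idem] by (simp add: conj_poly_mult)
  then have "cong_J (conj_poly E) (conj_poly E * conj_poly (conj_poly E))"
    using idempotent_cong_J_mult_conj[of "conj_poly E"] H by blast
  moreover have "cong_J (conj_poly E * conj_poly (conj_poly E)) (conj_poly E * E)"
    by (rule cong_J_mult[OF cong_J_refl cong_J_if_cyc_cong[OF conj_poly_conj_poly]])
  then have "cong_J (conj_poly E * conj_poly (conj_poly E)) (E * conj_poly E)"
    by (simp add: mult.commute)
  ultimately show ?thesis
    using idempotent_cong_J_mult_conj[of E] H idem cong_J_trans cong_J_sym by blast
qed

end



context cyclic_code_setting
begin

lemma frobenius_cong_J: "cong_J (F ^ q) (pcompose F (monom 1 q))"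
  using frobenius[of F 1] unfolding cong_J_def by (simp add: in_J_if_coeffs_in_M)

lemma frobenius_fixed_minus_const:
  assumes "cong_J (s ^ q) s" shows "cong_J ((s - [:c:]) ^ q) (s - [:c:])"
proof -
  have "pcompose (s - [:c:]) (monom 1 q) = pcompose s (monom 1 q) - [:c:]"
    by (simp add: pcompose_diff)
  moreover have "cong_J (pcompose s (monom 1 q) - [:c:]) (s - [:c:])"
    using cong_J_trans[OF cong_J_sym[OF frobenius_cong_J] assms] by (rule cong_J_diff[OF _ cong_J_refl])
  ultimately show ?thesis using frobenius_cong_J cong_J_trans by metis
qed

lemma idempotent_if_frobenius_fixed:
  assumes "cong_J (u ^ q) u"
  shows "cong_J ((1 - u ^ (q - 1)) * (1 - u ^ (q - 1))) (1 - u ^ (q - 1))"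
proof -
  have "u ^ (q - 1) = u ^ (q - 2) * u" "u ^ (q - 1) * u ^ (q - 1) = u ^ (q - 2) * u ^ q"
    using q_ge_2 by (simp_all add: numeral_2_eq_2 Suc_diff_Suc flip: power_Suc2 power_add)
  then have "(1 - u ^ (q - 1)) * (1 - u ^ (q - 1)) - (1 - u ^ (q - 1)) = u ^ (q - 2) * (u ^ q - u)"
    by (simp add: algebra_simps)
  moreover have "in_J (u ^ q - u)" using assms unfolding cong_J_def .
  ultimately show ?thesis unfolding cong_J_def by (simp add: in_J_mult_left)
qed

text \<open>Modulo \<open>J\<close>, a Frobenius-fixed \<open>s\<close> is a root of \<open>X ^ q - X = \<Prod>\<^sub>c (X - c)\<close>.\<close>

lemma prod_minus_Reps_cong_J_0:
  assumes "cong_J (s ^ q) s" shows "cong_J (\<Prod>c\<in>Reps. s - [:c:]) 0"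
proof -
  have "coeffs_in_M (pcompose ((\<Prod>c\<in>Reps. [:-c, 1:]) - (monom 1 q - monom 1 1)) s)"
    by (rule coeffs_in_M_pcompose[OF coeffs_in_M_prod_linear_Reps])
  moreover have "pcompose ((\<Prod>c\<in>Reps. [:-c, 1:]) - (monom 1 q - monom 1 1)) s
      = (\<Prod>c\<in>Reps. s - [:c:]) - (s ^ q - s)"
  proof -
    have "pcompose [:-c, 1:] s = s - [:c:]" for c by (simp add: pcompose_pCons)
    then show ?thesis by (simp only: pcompose_diff pcompose_prod pcompose_monom smult_1_left power_one_right)
  qed
  ultimately have "cong_J (\<Prod>c\<in>Reps. s - [:c:]) (s ^ q - s)"
    unfolding cong_J_def by (simp add: in_J_if_coeffs_in_M)
  moreover have "cong_J (s ^ q - s) 0" using assms unfolding cong_J_def by simp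
  ultimately show ?thesis using cong_J_trans by blast
qed

text \<open>For each \<open>c\<close>, \<open>E = 1 - (s - c) ^ (q - 1)\<close> is idempotent, hence (under the hypothesis \<open>H\<close>)
  fixed by conjugation; since \<open>(s - c) E \<equiv> 0\<close>, both \<open>s E\<close> and \<open>s (x\<^sup>-\<^sup>1) E\<close> are congruent to \<open>c E\<close>.\<close>

lemma diff_conj_cong_J_mult_power:
  assumes H: "\<And>b. in_J (b * conj_poly b) \<Longrightarrow> in_J b"
    and fixed: "cong_J (s ^ q) s"
  shows "cong_J (s - conj_poly s) ((s - conj_poly s) * (s - [:c:]) ^ (q - 1))"
proof -
  define u where "u = s - [:c:]"
  define E where "E = 1 - u ^ (q - 1)"
  have u_fixed: "cong_J (u ^ q) u" unfolding u_def using fixed by (rule frobenius_fixed_minus_const)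
  have E_conj: "cong_J E (conj_poly E)"
    using H idempotent_if_frobenius_fixed[OF u_fixed] unfolding E_def by (rule idempotent_cong_J_conj)
  have "u * E = u - u ^ q" unfolding E_def using q_ge_2
    by (simp add: algebra_simps power_Suc[symmetric] del: power_Suc)
  then have uE: "cong_J (u * E) 0"
    using in_J_diff[OF in_J_0 u_fixed[unfolded cong_J_def]] unfolding cong_J_def by simp
  then have s_E: "cong_J (s * E) ([:c:] * E)" unfolding cong_J_def u_def by (simp add: algebra_simps)
  have "cong_J ((conj_poly s - [:c:]) * conj_poly E) 0"
    using cong_J_conj_poly[OF uE] unfolding u_def
    by (simp add: conj_poly_mult conj_poly_diff conj_poly_const conj_poly_0)
  then have "cong_J ((conj_poly s - [:c:]) * E) 0"
    using cong_J_trans[OF cong_J_mult[OF cong_J_refl E_conj]] by blast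
  then have "cong_J (conj_poly s * E) ([:c:] * E)" unfolding cong_J_def by (simp add: algebra_simps)
  with s_E have "cong_J (s * E - conj_poly s * E) ([:c:] * E - [:c:] * E)" by (rule cong_J_diff)
  then have "cong_J ((s - conj_poly s) * E) 0" by (simp add: left_diff_distrib)
  then show ?thesis unfolding cong_J_def E_def u_def by (simp add: algebra_simps)
qed

lemma frobenius_fixed_cong_J_conj:
  assumes H: "\<And>b. in_J (b * conj_poly b) \<Longrightarrow> in_J b"
    and fixed: "cong_J (s ^ q) s"
  shows "cong_J s (conj_poly s)"
proof -
  define D where "D = s - conj_poly s"
  have absorbs: "cong_J D (D * (s - [:c:]) ^ (q - 1))" for c
    using H fixed unfolding D_def by (rule diff_conj_cong_J_mult_power)
  have partial: "cong_J D (D * (\<Prod>c\<in>T. (s - [:c:]) ^ (q - 1)))" if "T \<subseteq> Reps" for T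
  proof -
    have "finite T" using that finite_Reps finite_subset by blast
    then show ?thesis
    proof (induct T rule: finite_induct)
      case empty then show ?case by (simp add: cong_J_refl)
    next
      case (insert c T)
      have "cong_J (D * (s - [:c:]) ^ (q - 1)) (D * (\<Prod>c\<in>T. (s - [:c:]) ^ (q - 1)) * (s - [:c:]) ^ (q - 1))"
        by (rule cong_J_mult[OF insert(3) cong_J_refl])
      then have "cong_J D (D * (\<Prod>c\<in>T. (s - [:c:]) ^ (q - 1)) * (s - [:c:]) ^ (q - 1))"
        using absorbs[of c] cong_J_trans by blast
      then show ?case using insert(1,2) by (simp add: algebra_simps)
    qed
  qed
  have "cong_J ((\<Prod>c\<in>Reps. s - [:c:]) ^ (q - 1)) (0 ^ (q - 1))"
    by (rule cong_J_power[OF prod_minus_Reps_cong_J_0[OF fixed]])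
  then have "cong_J (\<Prod>c\<in>Reps. (s - [:c:]) ^ (q - 1)) 0"
    using q_ge_2 by (simp add: prod_power_distrib zero_power)
  then have "cong_J (D * (\<Prod>c\<in>Reps. (s - [:c:]) ^ (q - 1))) (D * 0)"
    by (rule cong_J_mult[OF cong_J_refl])
  then have "cong_J D 0" using partial[OF order.refl] cong_J_trans by simp
  then show ?thesis unfolding D_def cong_J_def by simp
qed

definition q_coset :: "nat set" where
  "q_coset = {i. i < n \<and> (\<exists>j. q ^ j mod n = i)}"

definition q_coset_sum :: "'a poly" where
  "q_coset_sum = (\<Sum>i\<in>q_coset. monom 1 i)"

lemma word_of_poly_q_coset_sum: "word_of_poly q_coset_sum = (\<lambda>i. if i \<in> q_coset then 1 else 0)"
proof
  fix i
  have "word_of_poly q_coset_sum i = (\<Sum>l\<in>q_coset. if i < n \<and> i = l mod n then 1 else 0)"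
    unfolding q_coset_sum_def word_of_poly_sum word_of_poly_monom ..
  also have "\<dots> = (\<Sum>l\<in>q_coset. if i = l then 1 else 0)"
    by (rule sum.cong) (auto simp: q_coset_def)
  also have "\<dots> = (if i \<in> q_coset then 1 else 0)"
    by (simp add: q_coset_def)
  finally show "word_of_poly q_coset_sum i = (if i \<in> q_coset then 1 else 0)" .
qed

lemma mult_q_power_totient_mod: "(l * q ^ totient n) mod n = l mod n"
proof -
  have "[q ^ totient n = 1] (mod n)"
    using euler_theorem[of q n] coprime_q_power_n[of 1] by simp
  then show ?thesis unfolding cong_def by (metis mod_mult_right_eq mult.right_neutral)
qed

lemma exists_mult_q_mod_eq:
  assumes "i < n" shows "\<exists>l<n. (l * q) mod n = i"
proof -
  obtain t where t: "totient n = Suc t" using n_pos by (cases "totient n") auto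
  have "((i * q ^ t) mod n * q) mod n = (i * q ^ t * q) mod n" by (rule mod_mult_left_eq)
  also have "i * q ^ t * q = i * q ^ totient n" unfolding t by (simp add: algebra_simps)
  finally have "((i * q ^ t) mod n * q) mod n = i" using mult_q_power_totient_mod assms by simp
  then show ?thesis using n_pos by (intro exI[of _ "(i * q ^ t) mod n"]) simp
qed

lemma mult_q_mod_in_q_coset_iff:
  assumes "i < n" "l < n" "(l * q) mod n = i"
  shows "l \<in> q_coset \<longleftrightarrow> i \<in> q_coset"
proof
  assume "l \<in> q_coset"
  then obtain j where "q ^ j mod n = l" unfolding q_coset_def by blast
  then have "q ^ Suc j mod n = i" using assms(3) by (metis mod_mult_left_eq power_Suc2)
  then show "i \<in> q_coset" unfolding q_coset_def using assms(1) by blast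
next
  assume "i \<in> q_coset"
  then obtain j where j: "q ^ j mod n = i" unfolding q_coset_def by blast
  obtain t where t: "totient n = Suc t" using n_pos by (cases "totient n") auto
  have "l = (l * q ^ totient n) mod n" using mult_q_power_totient_mod assms(2) by simp
  also have "l * q ^ totient n = l * q * q ^ t" unfolding t by (simp add: algebra_simps)
  also have "(l * q * q ^ t) mod n = ((l * q) mod n * q ^ t) mod n" by (rule mod_mult_left_eq[symmetric])
  also have "\<dots> = (q ^ j mod n * q ^ t) mod n" using assms(3) j by simp
  also have "\<dots> = q ^ (j + t) mod n" by (simp add: mod_mult_left_eq power_add)
  finally show "l \<in> q_coset" unfolding q_coset_def using assms(2) by auto
qed

lemma q_coset_sum_frobenius_fixed: "cong_J (q_coset_sum ^ q) q_coset_sum"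
proof -
  have "word_of_poly (pcompose q_coset_sum (monom 1 q)) = word_of_poly q_coset_sum"
  proof (rule word_of_poly_eqI)
    fix i assume i: "i < n"
    obtain l where l: "l < n" "(l * q) mod n = i" using exists_mult_q_mod_eq[OF i] by blast
    have "word_of_poly (pcompose q_coset_sum (monom 1 q)) i = word_of_poly q_coset_sum l"
      using coprime_q_power_n[of 1] by (intro word_of_poly_pcompose_monom[OF i l]) simp
    also have "\<dots> = word_of_poly q_coset_sum i"
      unfolding word_of_poly_q_coset_sum using mult_q_mod_in_q_coset_iff[OF i l] by simp
    finally show "word_of_poly (pcompose q_coset_sum (monom 1 q)) i = word_of_poly q_coset_sum i" .
  qed
  then show ?thesis
    using frobenius_cong_J cong_J_trans cong_J_if_cyc_cong unfolding cyc_cong_iff_word_eq by blast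
qed

text \<open>The coefficient of \<open>x ^ (n - 1)\<close> separates \<open>q_coset_sum\<close> from its conjugate, so the
  hypothesis \<open>H\<close> of the previous lemmas fails.\<close>

lemma exists_self_orthogonal_not_in_J:
  assumes no_minus_one: "\<forall>j. q ^ j mod n \<noteq> n - 1" and "n > 1"
  shows "\<exists>b. in_J (b * conj_poly b) \<and> \<not> in_J b"
proof (rule ccontr)
  assume "\<not> ?thesis"
  then have H: "in_J b" if "in_J (b * conj_poly b)" for b using that by blast
  then have "cong_J q_coset_sum (conj_poly q_coset_sum)"
    using q_coset_sum_frobenius_fixed by (rule frobenius_fixed_cong_J_conj)
  then have "word_of_poly q_coset_sum (n - 1) - word_of_poly (conj_poly q_coset_sum) (n - 1) \<in> M"
    unfolding cong_J_def in_J_def word_of_poly_diff by simp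
  moreover have "n - 1 \<notin> q_coset" unfolding q_coset_def using no_minus_one by auto
  moreover have "word_of_poly (conj_poly q_coset_sum) (n - 1) = word_of_poly q_coset_sum 1"
    unfolding conj_poly_def
    by (rule word_of_poly_pcompose_monom) (use \<open>n > 1\<close> coprime_diff_one_left_nat[of n] in auto)
  moreover have "1 \<in> q_coset" unfolding q_coset_def using \<open>n > 1\<close> by (auto intro!: exI[of _ 0])
  ultimately have "- 1 \<in> M" unfolding word_of_poly_q_coset_sum by simp
  then show False using one_not_in_M M_uminus by fastforce
qed

end


context cyclic_words
begin

text \<open>Over a finite ring the powers of \<open>b\<close> modulo \<open>x ^ n - 1\<close> are eventually periodic, and a
  power whose exponent is a multiple of the period past the preperiod is idempotent.\<close>

lemma exists_idempotent_power:
  fixes b :: "'a::comm_ring_1 poly"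
  assumes "finite (UNIV :: 'a set)"
  shows "\<exists>k\<ge>1. cyc_cong (b ^ k * b ^ k) (b ^ k)"
proof -
  define N where "N = card (words n :: (nat \<Rightarrow> 'a) set)"
  have "(\<lambda>k. word_of_poly (b ^ k)) ` {1..N + 1} \<subseteq> words n" using word_of_poly_in_words by auto
  then have "card ((\<lambda>k. word_of_poly (b ^ k)) ` {1..N + 1}) \<le> N"
    unfolding N_def using finite_words[OF assms] by (rule card_mono[rotated])
  then have "\<not> inj_on (\<lambda>k. word_of_poly (b ^ k)) {1..N + 1}" using card_image by fastforce
  then obtain x y where xy: "x \<in> {1..N + 1}" "y \<in> {1..N + 1}" "x \<noteq> y"
      "word_of_poly (b ^ x) = word_of_poly (b ^ y)"
    unfolding inj_on_def by blast
  define i where "i = min x y"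
  define j where "j = max x y"
  have ij: "i \<in> {1..N + 1}" "i < j" "word_of_poly (b ^ i) = word_of_poly (b ^ j)"
    using xy unfolding i_def j_def by (auto simp: min_def max_def)
  define t where "t = j - i"
  have "t \<ge> 1" "i \<ge> 1" using ij unfolding t_def by auto
  have "cyc_cong (b ^ (i + t)) (b ^ i)" using ij unfolding t_def by (simp add: cyc_cong_iff_word_eq)
  then have period: "cyc_cong (b ^ (a + t)) (b ^ a)" if "a \<ge> i" for a
  proof -
    have "b ^ (a + t) = b ^ (a - i) * b ^ (i + t)" "b ^ a = b ^ (a - i) * b ^ i"
      using that by (simp_all flip: power_add)
    then show ?thesis using cyc_cong_mult[OF cyc_cong_refl \<open>cyc_cong (b ^ (i + t)) (b ^ i)\<close>] by simp
  qed
  have periods: "cyc_cong (b ^ (a + t * m)) (b ^ a)" if "a \<ge> i" for a m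
  proof (induct m)
    case 0 then show ?case by (simp add: cyc_cong_refl)
  next
    case (Suc m)
    have "cyc_cong (b ^ (a + t * m + t)) (b ^ (a + t * m))" using period[of "a + t * m"] that by simp
    then show ?case using Suc cyc_cong_trans by (simp add: algebra_simps)
  qed
  have "i \<le> t * i" using \<open>t \<ge> 1\<close> by simp
  then have "cyc_cong (b ^ (t * i) * b ^ (t * i)) (b ^ (t * i))"
    using periods[of "t * i" i] by (simp add: power_add)
  moreover have "t * i \<ge> 1" using \<open>t \<ge> 1\<close> \<open>i \<ge> 1\<close> by simp
  ultimately show ?thesis by blast
qed

end

context cyclic_code_setting
begin

lemma exists_isotropic_idempotent:
  assumes "in_J (b * conj_poly b)" "\<not> in_J b"
  shows "\<exists>E. cyc_cong (E * E) E \<and> cyc_cong (E * conj_poly E) 0 \<and> \<not> in_J E"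
proof -
  obtain k where "k \<ge> 1" and idem: "cyc_cong (b ^ k * b ^ k) (b ^ k)"
    using exists_idempotent_power[OF finite_ring] by blast
  define E where "E = b ^ k"
  have "\<not> in_J E" unfolding E_def using in_J_if_power_in_J assms(2) by blast
  have "E * conj_poly E = (b * conj_poly b) ^ k" unfolding E_def by (simp add: conj_poly_power power_mult_distrib)
  moreover obtain k' where "k = Suc k'" using \<open>k \<ge> 1\<close> by (cases k) auto
  ultimately have "in_J (E * conj_poly E)" using in_J_mult_right[OF assms(1)] by simp
  moreover have "cyc_cong (conj_poly E * conj_poly E) (conj_poly E)"
    using cyc_cong_conj_poly[OF idem] unfolding E_def by (simp add: conj_poly_mult)
  with idem have "cyc_cong ((E * E) * (conj_poly E * conj_poly E)) (E * conj_poly E)"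
    unfolding E_def by (rule cyc_cong_mult)
  then have "cyc_cong ((E * conj_poly E) * (E * conj_poly E)) (E * conj_poly E)"
    by (simp add: ac_simps)
  ultimately have "cyc_cong (E * conj_poly E) 0" by (rule idempotent_in_J_eq_0)
  then show ?thesis using idem \<open>\<not> in_J E\<close> unfolding E_def by blast
qed

end


context cyclic_code_setting
begin

definition idempotent_complement :: "'a poly \<Rightarrow> 'a poly" where
  "idempotent_complement E = 1 - E - conj_poly E"

definition codeword :: "'a poly \<Rightarrow> 'a poly \<Rightarrow> 'a poly \<Rightarrow> 'a poly" where
  "codeword E f h = E * f + smult (g ^ (e div 2)) (idempotent_complement E * h)"

definition code_of_idempotent :: "'a poly \<Rightarrow> (nat \<Rightarrow> 'a) set" where
  "code_of_idempotent E = {word_of_poly (codeword E f h) | f h. True}"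

lemma code_of_idempotent_cyclic: "cyclic_code n (code_of_idempotent E)"
  unfolding cyclic_code_def linear_code_def
proof (intro conjI ballI allI)
  show "code_of_idempotent E \<subseteq> words n"
    unfolding code_of_idempotent_def using word_of_poly_in_words by auto
  have "word_of_poly (codeword E 0 0) = (\<lambda>i. 0)" unfolding codeword_def by (simp add: word_of_poly_0)
  then show "(\<lambda>i. 0) \<in> code_of_idempotent E"
    unfolding code_of_idempotent_def by (intro CollectI exI[of _ 0]) simp
next
  fix u v assume "u \<in> code_of_idempotent E" "v \<in> code_of_idempotent E"
  then obtain f1 h1 f2 h2 where "u = word_of_poly (codeword E f1 h1)" "v = word_of_poly (codeword E f2 h2)"
    unfolding code_of_idempotent_def by blast
  moreover have "codeword E f1 h1 + codeword E f2 h2 = codeword E (f1 + f2) (h1 + h2)"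
    unfolding codeword_def by (simp add: algebra_simps smult_add_right)
  ultimately have "(\<lambda>i. u i + v i) = word_of_poly (codeword E (f1 + f2) (h1 + h2))"
    by (simp add: word_of_poly_add[symmetric])
  then show "(\<lambda>i. u i + v i) \<in> code_of_idempotent E" unfolding code_of_idempotent_def by blast
next
  fix a v assume "v \<in> code_of_idempotent E"
  then obtain f h where "v = word_of_poly (codeword E f h)" unfolding code_of_idempotent_def by blast
  moreover have "smult a (codeword E f h) = codeword E (smult a f) (smult a h)"
    unfolding codeword_def by (simp add: smult_add_right mult.left_commute mult.commute)
  ultimately have "(\<lambda>i. a * v i) = word_of_poly (codeword E (smult a f) (smult a h))"
    by (simp add: word_of_poly_smult[symmetric])
  then show "(\<lambda>i. a * v i) \<in> code_of_idempotent E" unfolding code_of_idempotent_def by blast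
next
  fix v assume "v \<in> code_of_idempotent E"
  then obtain f h where "v = word_of_poly (codeword E f h)" unfolding code_of_idempotent_def by blast
  moreover have "monom 1 1 * codeword E f h = codeword E (monom 1 1 * f) (monom 1 1 * h)"
    unfolding codeword_def by (simp add: algebra_simps)
  ultimately have "cyc_shift n v = word_of_poly (codeword E (monom 1 1 * f) (monom 1 1 * h))"
    by (simp add: word_of_poly_x_mult[symmetric])
  then show "cyc_shift n v \<in> code_of_idempotent E" unfolding code_of_idempotent_def by blast
qed

context
  fixes E :: "'a poly"
  assumes idem: "cyc_cong (E * E) E" and isotropic: "cyc_cong (E * conj_poly E) 0"
begin

lemma idempotent_complement_cyc_cong:
  shows "cyc_cong (conj_poly (idempotent_complement E)) (idempotent_complement E)"
    and "cyc_cong (E * idempotent_complement E) 0"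
    and "cyc_cong (conj_poly E * idempotent_complement E) 0"
    and "cyc_cong (idempotent_complement E * idempotent_complement E) (idempotent_complement E)"
proof -
  let ?E' = "conj_poly E" and ?G = "idempotent_complement E"
  have idem': "cyc_cong (?E' * ?E') ?E'" using cyc_cong_conj_poly[OF idem] by (simp add: conj_poly_mult)
  have "conj_poly ?G = 1 - ?E' - conj_poly ?E'" unfolding idempotent_complement_def by (simp add: conj_poly_diff conj_poly_1)
  moreover have "cyc_cong (1 - ?E' - conj_poly ?E') (1 - ?E' - E)" by (intro cyc_cong_diff cyc_cong_refl conj_poly_conj_poly)
  moreover have "1 - ?E' - E = ?G" unfolding idempotent_complement_def by simp
  ultimately show "cyc_cong (conj_poly ?G) ?G" by simp
  have "E * ?G = E - E * E - E * ?E'" unfolding idempotent_complement_def by (simp add: algebra_simps)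
  moreover have "cyc_cong (E - E * E - E * ?E') (E - E - 0)" by (intro cyc_cong_diff cyc_cong_refl idem isotropic)
  ultimately show EG: "cyc_cong (E * ?G) 0" by simp
  have "?E' * ?G = ?E' - E * ?E' - ?E' * ?E'" unfolding idempotent_complement_def by (simp add: algebra_simps)
  moreover have "cyc_cong (?E' - E * ?E' - ?E' * ?E') (?E' - 0 - ?E')" by (intro cyc_cong_diff cyc_cong_refl idem' isotropic)
  ultimately show E'G: "cyc_cong (?E' * ?G) 0" by simp
  have "?G * ?G = ?G - E * ?G - ?E' * ?G" unfolding idempotent_complement_def by (simp add: algebra_simps)
  moreover have "cyc_cong (?G - E * ?G - ?E' * ?G) (?G - 0 - 0)" by (intro cyc_cong_diff cyc_cong_refl EG E'G)
  ultimately show "cyc_cong (?G * ?G) ?G" by simp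
qed

lemma codeword_orthogonal:
  assumes "even e"
  shows "cyc_cong (codeword E f1 h1 * conj_poly (codeword E f2 h2)) 0"
proof -
  let ?c = "g ^ (e div 2)" and ?E' = "conj_poly E" and ?G = "idempotent_complement E"
  have cc: "?c * ?c = 0" using assms power_e_eq_0 by (elim evenE) (simp add: mult_2 flip: power_add)
  have "codeword E f1 h1 * conj_poly (codeword E f2 h2)
      = (E * ?E') * (f1 * conj_poly f2) + smult ?c ((E * conj_poly ?G) * (f1 * conj_poly h2))
        + smult ?c ((?E' * ?G) * (h1 * conj_poly f2)) + smult (?c * ?c) (?G * conj_poly ?G * h1 * conj_poly h2)"
    unfolding codeword_def by (simp add: conj_poly_add conj_poly_mult conj_poly_smult algebra_simps smult_add_right)
  moreover have "cyc_cong (E * conj_poly ?G) 0"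
    using cyc_cong_mult[OF cyc_cong_refl idempotent_complement_cyc_cong(1), of E] idempotent_complement_cyc_cong(2) cyc_cong_trans by blast
  then have "cyc_cong ((E * ?E') * (f1 * conj_poly f2) + smult ?c ((E * conj_poly ?G) * (f1 * conj_poly h2))
        + smult ?c ((?E' * ?G) * (h1 * conj_poly f2)) + smult (?c * ?c) (?G * conj_poly ?G * h1 * conj_poly h2))
      (0 * (f1 * conj_poly f2) + smult ?c (0 * (f1 * conj_poly h2)) + smult ?c (0 * (h1 * conj_poly f2))
        + smult (?c * ?c) (?G * conj_poly ?G * h1 * conj_poly h2))"
    by (intro cyc_cong_add cyc_cong_mult[OF isotropic cyc_cong_refl] cyc_cong_smult
        cyc_cong_mult[OF _ cyc_cong_refl] idempotent_complement_cyc_cong(3) cyc_cong_refl)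
  ultimately show ?thesis using cc by simp
qed

lemma code_of_idempotent_self_orthogonal:
  assumes "even e"
  shows "code_of_idempotent E \<subseteq> dual_code n (code_of_idempotent E)"
proof
  fix u assume "u \<in> code_of_idempotent E"
  then obtain f1 h1 where u: "u = word_of_poly (codeword E f1 h1)" unfolding code_of_idempotent_def by blast
  have "code_inner n u v = 0" if vC: "v \<in> code_of_idempotent E" for v
  proof -
    obtain f2 h2 where v: "v = word_of_poly (codeword E f2 h2)"
      using vC unfolding code_of_idempotent_def by blast
    have "code_inner n u v = word_of_poly (poly_of_word u * conj_poly (poly_of_word v)) 0"
      using code_inner_eq_word_of_poly u v word_of_poly_in_words by metis
    moreover have "cyc_cong (poly_of_word u * conj_poly (poly_of_word v))
        (codeword E f1 h1 * conj_poly (codeword E f2 h2))"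
      unfolding u v by (intro cyc_cong_mult cyc_cong_conj_poly cyc_cong_sym[OF cyc_cong_poly_of_word])
    ultimately show ?thesis
      using codeword_orthogonal[OF assms] by (simp add: cyc_cong_iff_word_eq word_of_poly_0)
  qed
  then show "u \<in> dual_code n (code_of_idempotent E)" unfolding dual_code_def using u word_of_poly_in_words by blast
qed

text \<open>With \<open>G = idempotent_complement E\<close>, a word \<open>U\<close> of the dual satisfies \<open>U E (x\<^sup>-\<^sup>1) \<equiv> 0\<close> and
  \<open>g ^ (e div 2) U G \<equiv> 0\<close>; hence \<open>U G = g ^ (e div 2) W\<close> for some \<open>W\<close>, and
  \<open>U = U E + U E (x\<^sup>-\<^sup>1) + U G \<equiv> U E + g ^ (e div 2) W G\<close>.\<close>

lemma dual_code_of_idempotent_subset: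
  assumes "even e"
  shows "dual_code n (code_of_idempotent E) \<subseteq> code_of_idempotent E"
proof
  fix u assume u: "u \<in> dual_code n (code_of_idempotent E)"
  let ?c = "g ^ (e div 2)" and ?G = "idempotent_complement E" and ?U = "poly_of_word u"
  have cyc: "cyclic_code n (code_of_idempotent E)" by (rule code_of_idempotent_cyclic)
  have "word_of_poly E \<in> code_of_idempotent E"
    unfolding code_of_idempotent_def codeword_def by (intro CollectI exI[of _ 1] exI[of _ 0]) simp
  then have UE': "cyc_cong (?U * conj_poly E) 0" by (rule dual_code_orthogonal[OF cyc u])
  have "word_of_poly (smult ?c ?G) \<in> code_of_idempotent E"
    unfolding code_of_idempotent_def codeword_def by (intro CollectI exI[of _ 0] exI[of _ 1]) simp
  then have UcG: "cyc_cong (?U * conj_poly (smult ?c ?G)) 0" by (rule dual_code_orthogonal[OF cyc u])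
  have "cyc_cong (?U * conj_poly (smult ?c ?G)) (smult ?c (?U * ?G))"
    using cyc_cong_smult[OF cyc_cong_mult[OF cyc_cong_refl idempotent_complement_cyc_cong(1), of ?U], of ?c]
    by (simp add: conj_poly_smult)
  then have "cyc_cong (smult ?c (?U * ?G)) 0" using UcG by (rule cyc_cong_trans[OF cyc_cong_sym])
  then have "word_of_poly (smult ?c (?U * ?G)) = (\<lambda>i. 0)"
    unfolding cyc_cong_iff_word_eq word_of_poly_0 .
  then have "?c * word_of_poly (?U * ?G) l = 0" for l
    unfolding word_of_poly_smult by (rule fun_cong)
  moreover have "e - e div 2 = e div 2" using assms by (elim evenE) simp
  ultimately have "\<exists>y. word_of_poly (?U * ?G) l = ?c * y" for l
    using dvd_power_if_power_mult_eq_0[of "e div 2" "word_of_poly (?U * ?G) l"] by simp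
  then obtain w where w: "w \<in> words n" "word_of_poly (?U * ?G) = (\<lambda>l. ?c * w l)"
    using words_factor[OF word_of_poly_in_words] by blast
  then have UG: "cyc_cong (?U * ?G) (smult ?c (poly_of_word w))"
    unfolding cyc_cong_iff_word_eq word_of_poly_smult by (simp add: word_of_poly_poly_of_word)
  have "cyc_cong (?U * ?G) (?U * ?G * ?G)"
    using cyc_cong_sym[OF cyc_cong_mult[OF cyc_cong_refl idempotent_complement_cyc_cong(4), of ?U]]
    by (simp add: mult.assoc)
  from cyc_cong_trans[OF this cyc_cong_mult[OF UG cyc_cong_refl]]
  have UG': "cyc_cong (?U * ?G) (smult ?c (?G * poly_of_word w))" by (simp add: mult.commute)
  have "?U = E * ?U + ?U * conj_poly E + ?U * ?G" unfolding idempotent_complement_def by (simp add: algebra_simps)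
  also have "cyc_cong (E * ?U + ?U * conj_poly E + ?U * ?G) (E * ?U + 0 + smult ?c (?G * poly_of_word w))"
    by (rule cyc_cong_add[OF cyc_cong_add[OF cyc_cong_refl UE'] UG'])
  finally have "cyc_cong ?U (codeword E ?U (poly_of_word w))" unfolding codeword_def by simp
  then have "word_of_poly ?U = word_of_poly (codeword E ?U (poly_of_word w))"
    unfolding cyc_cong_iff_word_eq .
  moreover have "u \<in> words n" using u unfolding dual_code_def by blast
  ultimately have "u = word_of_poly (codeword E ?U (poly_of_word w))"
    by (simp add: word_of_poly_poly_of_word)
  then show "u \<in> code_of_idempotent E" unfolding code_of_idempotent_def by blast
qed

lemma code_of_idempotent_neq_trivial_code:
  assumes "even e" "\<not> in_J E"
  shows "code_of_idempotent E \<noteq> trivial_code n g e"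
proof
  assume "code_of_idempotent E = trivial_code n g e"
  moreover have "word_of_poly E \<in> code_of_idempotent E"
    unfolding code_of_idempotent_def codeword_def by (intro CollectI exI[of _ 1] exI[of _ 0]) simp
  ultimately obtain x where x: "word_of_poly E = (\<lambda>i. g ^ (e div 2) * x i)" unfolding trivial_code_def by blast
  have "e div 2 \<ge> 1" using assms(1) e_pos by (elim evenE) simp
  then have "g ^ (e div 2) = g * g ^ (e div 2 - 1)" by (simp add: power_eq_if)
  then have "g ^ (e div 2) * x i = g * (g ^ (e div 2 - 1) * x i)" for i
    by (simp add: mult.assoc)
  then have "word_of_poly E i \<in> M" for i unfolding x mem_M_iff by blast
  then show False using assms(2) unfolding in_J_def by blast
qed

end

theorem exists_nontrivial_self_dual_code:
  assumes "\<forall>j. q ^ j mod n \<noteq> n - 1" "n > 1" "even e"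
  shows "\<exists>C. cyclic_code n C \<and> self_dual n C \<and> C \<noteq> trivial_code n g e"
proof -
  obtain b where "in_J (b * conj_poly b)" "\<not> in_J b"
    using exists_self_orthogonal_not_in_J[OF assms(1,2)] by blast
  then obtain E where E: "cyc_cong (E * E) E" "cyc_cong (E * conj_poly E) 0" "\<not> in_J E"
    using exists_isotropic_idempotent by blast
  have "self_dual n (code_of_idempotent E)"
    unfolding self_dual_def using code_of_idempotent_cyclic[of E] E(1,2) assms(3)
      code_of_idempotent_self_orthogonal dual_code_of_idempotent_subset
    unfolding cyclic_code_def by blast
  then show ?thesis using code_of_idempotent_cyclic code_of_idempotent_neq_trivial_code E assms(3) by blast
qed

end


section \<open>Powers of \<open>q\<close> congruent to \<open>-1\<close>\<close>

lemma even_ord_if_power_mod_eq_minus_one: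
  fixes n q j :: nat
  assumes "odd n" "n > 1" "coprime n q" "q ^ j mod n = n - 1"
  shows "even (ord n q)"
proof (rule ccontr)
  assume odd: "odd (ord n q)"
  have "(q ^ j * q ^ j) mod n = ((n - 1) * (n - 1)) mod n"
    using assms(4) by (metis mod_mult_eq)
  also have "\<dots> = 1 mod n" using assms(2) by (intro minus_one_squared_mod) simp
  finally have "[q ^ (2 * j) = 1] (mod n)" unfolding cong_def by (simp add: mult_2 power_add)
  then have "ord n q dvd 2 * j" by (simp add: ord_divides')
  moreover have "coprime (ord n q) 2" using odd by simp
  ultimately have "ord n q dvd j" using coprime_dvd_mult_right_iff by blast
  then have "[q ^ j = 1] (mod n)" by (simp add: ord_divides')
  then have "n - 1 = 1" using assms(2,4) unfolding cong_def by simp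
  then have "n = 2" by simp
  then show False using assms(1) by simp
qed

text \<open>The prime cannot divide both \<open>x - 1\<close> and \<open>x + 1\<close>, so \<open>n\<close> divides one of them.\<close>

lemma sqrt_one_mod_odd_prime_power:
  fixes n l k x :: nat
  assumes "odd n" "prime l" "n = l ^ k" "x < n" "[x * x = 1] (mod n)"
  shows "x = 1 \<or> x = n - 1"
proof (cases "n = 1")
  case True
  then show ?thesis using assms(4) by simp
next
  case False
  then have "n > 1" using assms(4) by simp
  have "x \<ge> 1" using assms(5) \<open>n > 1\<close> by (cases x) (auto simp: cong_def)
  then have "n dvd (x - 1) * (x + 1)"
    using assms(5) by (simp add: cong_altdef_nat algebra_simps)
  have "l \<noteq> 2" using assms(1,3) \<open>n > 1\<close> by (cases k) auto
  have not_both: "\<not> (l dvd x - 1 \<and> l dvd x + 1)"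
  proof
    assume "l dvd x - 1 \<and> l dvd x + 1"
    then have "l dvd (x + 1) - (x - 1)" using dvd_diff_nat by blast
    then have "l dvd 2" using \<open>x \<ge> 1\<close> by simp
    then have "l \<le> 2" by (rule dvd_imp_le) simp
    then show False using \<open>l \<noteq> 2\<close> prime_ge_2_nat[OF assms(2)] by simp
  qed
  show ?thesis
  proof (cases "l dvd x - 1")
    case True
    then have "coprime n (x + 1)"
      using not_both assms(2,3) by (simp add: prime_imp_coprime coprime_commute)
    then have "n dvd x - 1" using \<open>n dvd (x - 1) * (x + 1)\<close> coprime_dvd_mult_left_iff by blast
    have "x - 1 = 0"
    proof (rule ccontr)
      assume "x - 1 \<noteq> 0"
      then have "n \<le> x - 1" using \<open>n dvd x - 1\<close> by (simp add: dvd_imp_le)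
      then show False using assms(4) by simp
    qed
    then show ?thesis using \<open>x \<ge> 1\<close> by simp
  next
    case False
    then have "coprime n (x - 1)" using assms(2,3) by (simp add: prime_imp_coprime coprime_commute)
    then have "n dvd x + 1" using \<open>n dvd (x - 1) * (x + 1)\<close> coprime_dvd_mult_right_iff by blast
    then have "n \<le> x + 1" by (simp add: dvd_imp_le)
    then show ?thesis using assms(4) by arith
  qed
qed

lemma ex_power_mod_eq_minus_one_iff_even_ord:
  fixes n q l k :: nat
  assumes "odd n" "prime l" "k > 0" "n = l ^ k" "coprime n q"
  shows "(\<exists>j. q ^ j mod n = n - 1) \<longleftrightarrow> even (ord n q)"
proof -
  have "n > 1" using assms(2,3,4) by (metis one_less_power prime_gt_1_nat)
  show ?thesis
  proof
    assume "\<exists>j. q ^ j mod n = n - 1"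
    then obtain j where "q ^ j mod n = n - 1" by blast
    then show "even (ord n q)" by (rule even_ord_if_power_mod_eq_minus_one[OF assms(1) \<open>n > 1\<close> assms(5)])
  next
    assume "even (ord n q)"
    then obtain j where j: "ord n q = 2 * j" by (rule evenE)
    have "ord n q > 0" using assms(5) ord_eq_0[of n q] by simp
    then have j_bounds: "0 < j" "j < ord n q" using j by simp_all
    have "[q ^ j * q ^ j = 1] (mod n)" using ord[of q n] j by (simp add: mult_2 power_add)
    then have "[(q ^ j mod n) * (q ^ j mod n) = 1] (mod n)" by (simp add: cong_def mod_mult_eq)
    moreover have "q ^ j mod n < n" using \<open>n > 1\<close> by simp
    ultimately have "q ^ j mod n = 1 \<or> q ^ j mod n = n - 1"
      using sqrt_one_mod_odd_prime_power[OF assms(1,2,4)] by blast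
    moreover have "q ^ j mod n \<noteq> 1" using ord_minimal[OF j_bounds] \<open>n > 1\<close> unfolding cong_def by simp
    ultimately show "\<exists>j. q ^ j mod n = n - 1" by auto
  qed
qed

theorem mainTheorem8:
  fixes \<gamma> :: "'a::comm_ring_1"
    and e n p r :: nat
  assumes "finite_chain_ring TYPE('a)"
    and "is_maximal_ideal (principal_ideal \<gamma>)"
    and "nilpotency_index \<gamma> e"
    and "even e"
    and "prime p"
    and "card (quotient_ring (principal_ideal \<gamma>)) = p ^ r"
    and "odd n"
    and "n > 0"
    and "\<exists>q k. prime q \<and> k > 0 \<and> n = q ^ k"
    and "coprime n p"
  shows "(\<exists>C. cyclic_code n C \<and> self_dual n C \<and> C \<noteq> trivial_code n \<gamma> e)
         \<longleftrightarrow> odd (ord n (p ^ r))"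
proof -
  have "finite (UNIV :: 'a set)" using assms(1) unfolding finite_chain_ring_def by blast
  then interpret cyclic_code_setting \<gamma> e "p ^ r" n p r
    by unfold_locales (use assms in auto)
  obtain l k where lk: "prime l" "k > 0" "n = l ^ k" using assms(9) by blast
  then have "n > 1" by (metis one_less_power prime_gt_1_nat)
  have minus_one_iff: "(\<exists>j. (p ^ r) ^ j mod n = n - 1) \<longleftrightarrow> even (ord n (p ^ r))"
    using assms(7,10) lk by (intro ex_power_mod_eq_minus_one_iff_even_ord) simp_all
  show ?thesis
  proof
    assume "\<exists>C. cyclic_code n C \<and> self_dual n C \<and> C \<noteq> trivial_code n \<gamma> e"
    then show "odd (ord n (p ^ r))"
      using minus_one_iff self_dual_eq_trivial_code_if_minus_one_power assms(4) by blast
  next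
    assume "odd (ord n (p ^ r))"
    then show "\<exists>C. cyclic_code n C \<and> self_dual n C \<and> C \<noteq> trivial_code n \<gamma> e"
      using minus_one_iff exists_nontrivial_self_dual_code \<open>n > 1\<close> assms(4) by blast
  qed
qed

end
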